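(* Let $(d_n)$ be integers with $d_n\ge2$ and $d_n\to\infty$, and let $\boldsymbol{X}_{n,1},\boldsymbol{X}_{n,2}$ be independent random vectors uniformly distributed on $\mathbb{S}^{d_n}$. For any integers $k,m\ge1$, as $d_n\to\infty$, $$\mathrm{E}\Big[\big(C_k^{(d_n-1)/2}(\boldsymbol{X}_{n,1}^\top\boldsymbol{X}_{n,2})\big)^{2m}\Big]\asymp d_n^{mk}\quad\text{and}\quad d_{k,d_n}\sim\Big(1+\frac{2k}{d_n-1}\Big)\frac{d_n^k}{k!}.$$
   Context: $C_k^{(\lambda)}$ is the Gegenbauer polynomial of degree $k$ and index $\lambda$. $d_{k,d}:=\binom{d+k-2}{d-1}+\binom{d+k-1}{d-1}=\big(1+\frac{2k}{d-1}\big)\frac{\Gamma(d-1+k)}{\Gamma(d-1)k!}$. For sequences, $a_n\asymp b_n$ means $a_n/b_n\to c$ for some constant $c\neq0$, and $a_n\sim b_n$ means $a_n/b_n\to1$. *)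

theory Defs
  imports "HOL-Probability.Probability"
begin

definition gegenbauer :: "nat \<Rightarrow> real \<Rightarrow> real \<Rightarrow> real" where
  "gegenbauer k lam x =
     (\<Sum>j\<le>k div 2. (-1)^j * pochhammer lam (k - j) / (fact j * fact (k - 2*j)) * (2*x)^(k - 2*j))"

definition dim_harm :: "nat \<Rightarrow> nat \<Rightarrow> real" where
  "dim_harm k d = real ((d + k - 2) choose (d - 1)) + real ((d + k - 1) choose (d - 1))"

text \<open>Euclidean space R^(d+1), vectors indexed by {..d}.\<close>
definition euclid :: "nat \<Rightarrow> (nat \<Rightarrow> real) measure" where
  "euclid d = PiM {..d} (\<lambda>_. lborel)"

definition sqnorm :: "nat \<Rightarrow> (nat \<Rightarrow> real) \<Rightarrow> real" where
  "sqnorm d x = (\<Sum>i\<le>d. (x i)^2)"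

text \<open>Uniform distribution on the unit sphere S^d in R^(d+1): the normalized surface
  (= cone) measure, i.e. the push-forward of the uniform distribution on the closed unit
  ball under radial projection x \<mapsto> x/|x|.\<close>
definition sphere_unif :: "nat \<Rightarrow> (nat \<Rightarrow> real) measure" where
  "sphere_unif d =
     distr (uniform_measure (euclid d) {x \<in> space (euclid d). sqnorm d x \<le> 1})
           (euclid d) (\<lambda>x. \<lambda>i\<in>{..d}. x i / sqrt (sqnorm d x))"

definition gegen_moment :: "nat \<Rightarrow> nat \<Rightarrow> nat \<Rightarrow> real" where
  "gegen_moment d k m =
     (\<integral>p. (gegenbauer k ((real d - 1) / 2) (\<Sum>i\<le>d. fst p i * snd p i)) ^ (2*m)
        \<partial>(sphere_unif d \<Otimes>\<^sub>M sphere_unif d))"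

end

theory Submission
  imports Defs "HOL-Computational_Algebra.Polynomial"
begin

text \<open>
  Let T be the inner product of two independent uniform points on the sphere S^d. Expanding the
  Gegenbauer polynomial gives (C_k^((d-1)/2)(t))^(2m) = d^(mk) P_d(d t^2), where P_d is a
  polynomial of degree mk whose coefficients converge as d tends to infinity; in the limit,
  P(z^2) = (He_k(z) / k!)^(2m) with He_k the Hermite polynomial.

  The even moments are E T^(2i) = (2i-1)!! / ((d+1)(d+3)...(d+2i-1)). They are computed by
  realising the uniform distribution on the sphere as the direction of a Gaussian vector G, which
  is independent of its length, so that E (x.G)^(2i) = E |G|^(2i) E (x.X)^(2i) for X uniform on
  the sphere. Hence d^i E T^(2i) tends to (2i-1)!! = E Z^(2i) for Z standard normal, and
  d^(-mk) E[C^(2m)] tends to E[(He_k(Z) / k!)^(2m)], which is positive. The statement about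
  d_(k,d) is the asymptotics (d)_r ~ d^r of rising factorials.
\<close>

section \<open>Homogeneous functions and the unit ball\<close>

interpretation lborel_product: product_sigma_finite "\<lambda>_::nat. lborel::real measure"
  by standard

definition euclid_scale :: "nat \<Rightarrow> real \<Rightarrow> (nat \<Rightarrow> real) \<Rightarrow> (nat \<Rightarrow> real)" where
  "euclid_scale d c x = (\<lambda>i\<in>{..d}. c * x i)"

lemma space_euclid: "space (euclid d) = PiE {..d} (\<lambda>_. UNIV)"
  by (simp add: euclid_def space_PiM)

lemma measurable_euclid_scale[measurable]: "euclid_scale d c \<in> euclid d \<rightarrow>\<^sub>M euclid d"
  unfolding euclid_scale_def euclid_def by measurable

lemma sigma_finite_euclid: "sigma_finite_measure (euclid d)"
  unfolding euclid_def by (rule lborel_product.sigma_finite) simp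

lemma emeasure_lborel_vimage_mult:
  assumes "(c::real) > 0" "A \<in> sets lborel"
  shows "emeasure lborel {t. c * t \<in> A} = ennreal (1/c) * emeasure lborel A"
proof -
  have "emeasure lborel {t. c * t \<in> A} = emeasure (distr lborel borel ((*) c)) A"
    using assms by (subst emeasure_distr) (auto simp: vimage_def)
  also have "\<dots> = emeasure (density lborel (\<lambda>_. inverse \<bar>c\<bar>)) A"
    using assms by (simp add: lborel_distr_mult)
  also have "\<dots> = ennreal (1/c) * emeasure lborel A"
    using assms by (subst emeasure_density_const) (auto simp: divide_inverse)
  finally show ?thesis .
qed

lemma ennreal_power_card_mult_prod_cancel:
  fixes a :: "'i \<Rightarrow> ennreal"
  assumes "c > 0"
  shows "ennreal (c ^ card I) * (\<Prod>i\<in>I. ennreal (1/c) * a i) = (\<Prod>i\<in>I. a i)"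
proof -
  have "ennreal (c ^ card I) = (\<Prod>i\<in>I. ennreal c)"
    using assms by (simp add: ennreal_power)
  then have "ennreal (c ^ card I) * (\<Prod>i\<in>I. ennreal (1/c) * a i) = (\<Prod>i\<in>I. (ennreal c * ennreal (1/c)) * a i)"
    by (simp only: prod.distrib[symmetric] mult.assoc)
  also have "\<dots> = (\<Prod>i\<in>I. a i)"
    using assms by (simp add: ennreal_mult[symmetric])
  finally show ?thesis .
qed

lemma density_distr_euclid_scale:
  assumes c: "c > 0"
  shows "density (distr (euclid d) (euclid d) (euclid_scale d c)) (\<lambda>_. ennreal (c ^ Suc d)) = euclid d"
  unfolding euclid_def
proof (rule lborel_product.PiM_eqI)
  let ?M = "Pi\<^sub>M {..d} (\<lambda>_. lborel) :: (nat \<Rightarrow> real) measure"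
  fix A :: "nat \<Rightarrow> real set" assume A: "\<And>i. i \<in> {..d} \<Longrightarrow> A i \<in> sets lborel"
  have A': "{t. c * t \<in> A i} \<in> sets lborel" if "i \<in> {..d}" for i
    using measurable_sets[of "(*) c" borel borel "A i"] A[OF that] by (simp add: vimage_def)
  have vimage: "euclid_scale d c -` Pi\<^sub>E {..d} A \<inter> space ?M = Pi\<^sub>E {..d} (\<lambda>i. {t. c * t \<in> A i})"
    by (auto simp: euclid_scale_def space_PiM PiE_def Pi_def extensional_def)
  have box: "Pi\<^sub>E {..d} A \<in> sets ?M"
    using A by (intro sets_PiM_I_finite) auto
  have "emeasure (density (distr ?M ?M (euclid_scale d c)) (\<lambda>_. ennreal (c ^ Suc d))) (Pi\<^sub>E {..d} A)
      = ennreal (c ^ Suc d) * emeasure ?M (Pi\<^sub>E {..d} (\<lambda>i. {t. c * t \<in> A i}))"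
    using box measurable_euclid_scale[of d c] vimage unfolding euclid_def
    by (simp add: emeasure_density_const emeasure_distr)
  also have "emeasure ?M (Pi\<^sub>E {..d} (\<lambda>i. {t. c * t \<in> A i}))
      = (\<Prod>i\<in>{..d}. ennreal (1/c) * emeasure lborel (A i))"
  proof -
    have "emeasure ?M (Pi\<^sub>E {..d} (\<lambda>i. {t. c * t \<in> A i})) = (\<Prod>i\<in>{..d}. emeasure lborel {t. c * t \<in> A i})"
      using A' by (intro lborel_product.emeasure_PiM) auto
    then show ?thesis
      using A c by (simp add: emeasure_lborel_vimage_mult)
  qed
  also have "ennreal (c ^ Suc d) * (\<Prod>i\<in>{..d}. ennreal (1/c) * emeasure lborel (A i))
      = (\<Prod>i\<in>{..d}. emeasure lborel (A i))"
    using ennreal_power_card_mult_prod_cancel[OF c, of "{..d}"] by simp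
  finally show "emeasure (density (distr ?M ?M (euclid_scale d c)) (\<lambda>_. ennreal (c ^ Suc d))) (Pi\<^sub>E {..d} A)
      = (\<Prod>i\<in>{..d}. emeasure lborel (A i))" .
qed simp_all

lemma nn_integral_euclid_scale:
  assumes c: "c > 0" and f[measurable]: "f \<in> borel_measurable (euclid d)"
  shows "(\<integral>\<^sup>+x. f x \<partial>euclid d) = ennreal (c ^ Suc d) * (\<integral>\<^sup>+x. f (euclid_scale d c x) \<partial>euclid d)"
proof -
  have "(\<integral>\<^sup>+x. f x \<partial>euclid d)
      = (\<integral>\<^sup>+x. f x \<partial>density (distr (euclid d) (euclid d) (euclid_scale d c)) (\<lambda>_. ennreal (c ^ Suc d)))"
    using density_distr_euclid_scale[OF c, of d] by simp
  also have "\<dots> = (\<integral>\<^sup>+x. ennreal (c ^ Suc d) * f (euclid_scale d c x) \<partial>euclid d)"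
    by (simp add: nn_integral_density nn_integral_distr)
  also have "\<dots> = ennreal (c ^ Suc d) * (\<integral>\<^sup>+x. f (euclid_scale d c x) \<partial>euclid d)"
    by (rule nn_integral_cmult) auto
  finally show ?thesis .
qed

lemma measurable_sqnorm[measurable]: "sqnorm d \<in> borel_measurable (euclid d)"
  unfolding sqnorm_def[abs_def] euclid_def by (intro borel_measurable_sum) measurable

lemma sqnorm_nonneg: "sqnorm d x \<ge> 0"
  unfolding sqnorm_def by (intro sum_nonneg) auto

lemma sqnorm_euclid_scale: "sqnorm d (euclid_scale d c x) = c\<^sup>2 * sqnorm d x"
  unfolding sqnorm_def euclid_scale_def by (simp add: sum_distrib_left power_mult_distrib)

definition pos_homogeneous :: "nat \<Rightarrow> nat \<Rightarrow> ((nat \<Rightarrow> real) \<Rightarrow> ennreal) \<Rightarrow> bool" where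
  "pos_homogeneous d s g \<longleftrightarrow>
     (\<forall>x\<in>space (euclid d). \<forall>c>0. g (euclid_scale d c x) = ennreal (c ^ s) * g x)"

lemma pos_homogeneous_mult_sqnorm_power:
  assumes "pos_homogeneous d s f"
  shows "pos_homogeneous d (s + 2*q) (\<lambda>x. f x * ennreal (sqnorm d x ^ q))"
  unfolding pos_homogeneous_def
proof (intro ballI allI impI)
  fix x c assume x: "x \<in> space (euclid d)" and c: "(c::real) > 0"
  have "f (euclid_scale d c x) * ennreal (sqnorm d (euclid_scale d c x) ^ q)
      = ennreal (c ^ s) * f x * ennreal ((c\<^sup>2)^q * sqnorm d x ^ q)"
    using assms x c unfolding pos_homogeneous_def by (simp add: sqnorm_euclid_scale power_mult_distrib)
  also have "\<dots> = ennreal (c ^ s * (c\<^sup>2)^q) * (f x * ennreal (sqnorm d x ^ q))"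
    using c by (simp add: ennreal_mult sqnorm_nonneg mult_ac)
  finally show "f (euclid_scale d c x) * ennreal (sqnorm d (euclid_scale d c x) ^ q)
      = ennreal (c ^ (s + 2*q)) * (f x * ennreal (sqnorm d x ^ q))"
    by (simp add: power_add power_mult)
qed

definition ball_integral :: "nat \<Rightarrow> ((nat \<Rightarrow> real) \<Rightarrow> ennreal) \<Rightarrow> ennreal" where
  "ball_integral d g = (\<integral>\<^sup>+x. g x * indicator {x. sqnorm d x \<le> 1} x \<partial>euclid d)"

lemma nn_integral_ball_scale:
  assumes h: "pos_homogeneous d s g" and g[measurable]: "g \<in> borel_measurable (euclid d)"
    and r: "r > 0"
  shows "(\<integral>\<^sup>+x. g x * indicator {x. sqnorm d x \<le> r\<^sup>2} x \<partial>euclid d)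
       = ennreal (r ^ (Suc d + s)) * ball_integral d g"
proof -
  have "(\<integral>\<^sup>+x. g x * indicator {x. sqnorm d x \<le> r\<^sup>2} x \<partial>euclid d)
     = ennreal (r ^ Suc d) *
       (\<integral>\<^sup>+x. g (euclid_scale d r x) * indicator {x. sqnorm d x \<le> r\<^sup>2} (euclid_scale d r x) \<partial>euclid d)"
    using r by (intro nn_integral_euclid_scale) auto
  also have "(\<integral>\<^sup>+x. g (euclid_scale d r x) * indicator {x. sqnorm d x \<le> r\<^sup>2} (euclid_scale d r x) \<partial>euclid d)
      = (\<integral>\<^sup>+x. ennreal (r ^ s) * (g x * indicator {x. sqnorm d x \<le> 1} x) \<partial>euclid d)"
  proof (intro nn_integral_cong)
    fix x assume "x \<in> space (euclid d)"
    moreover have "(sqnorm d (euclid_scale d r x) \<le> r\<^sup>2) = (sqnorm d x \<le> 1)"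
      using r by (simp add: sqnorm_euclid_scale)
    ultimately show "g (euclid_scale d r x) * indicator {x. sqnorm d x \<le> r\<^sup>2} (euclid_scale d r x)
        = ennreal (r ^ s) * (g x * indicator {x. sqnorm d x \<le> 1} x)"
      using h r unfolding pos_homogeneous_def by (simp add: indicator_def mult.assoc)
  qed
  also have "\<dots> = ennreal (r ^ s) * ball_integral d g"
    unfolding ball_integral_def by (rule nn_integral_cmult) auto
  moreover have "ennreal (r ^ (Suc d + s)) = ennreal (r ^ Suc d) * ennreal (r ^ s)"
    using r by (simp add: ennreal_mult[symmetric] power_add[symmetric] del: power_Suc)
  ultimately show ?thesis
    by (simp add: mult.assoc del: power_Suc)
qed

text \<open>Polar coordinates in integrated form, obtained from Fubini and the scaling law above.\<close>
lemma nn_integral_radial_layers: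
  assumes h: "pos_homogeneous d s g" and g[measurable]: "g \<in> borel_measurable (euclid d)"
    and nu[measurable]: "nu \<in> borel_measurable (borel :: real measure)"
  shows "(\<integral>\<^sup>+x. g x * (\<integral>\<^sup>+r. nu r * indicator {0<..} r * indicator {x. sqnorm d x \<le> r\<^sup>2} x \<partial>lborel) \<partial>euclid d)
       = (\<integral>\<^sup>+r. nu r * indicator {0<..} r * ennreal (r ^ (Suc d + s)) \<partial>lborel) * ball_integral d g"
proof -
  interpret pair_sigma_finite "euclid d" "lborel::real measure"
    using sigma_finite_euclid[of d]
    by (simp add: pair_sigma_finite_def lborel.sigma_finite_measure_axioms)
  have "(\<integral>\<^sup>+x. g x * (\<integral>\<^sup>+r. nu r * indicator {0<..} r * indicator {x. sqnorm d x \<le> r\<^sup>2} x \<partial>lborel) \<partial>euclid d)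
      = (\<integral>\<^sup>+x. (\<integral>\<^sup>+r. nu r * indicator {0<..} r * (g x * indicator {x. sqnorm d x \<le> r\<^sup>2} x) \<partial>lborel) \<partial>euclid d)"
    by (intro nn_integral_cong) (simp add: nn_integral_cmult[symmetric] mult_ac)
  also have "\<dots> = (\<integral>\<^sup>+r. (\<integral>\<^sup>+x. nu r * indicator {0<..} r * (g x * indicator {x. sqnorm d x \<le> r\<^sup>2} x) \<partial>euclid d) \<partial>lborel)"
    by (intro Fubini'[symmetric]) measurable
  also have "\<dots> = (\<integral>\<^sup>+r. nu r * indicator {0<..} r * ennreal (r ^ (Suc d + s)) * ball_integral d g \<partial>lborel)"
  proof (intro nn_integral_cong)
    fix r :: real
    show "(\<integral>\<^sup>+x. nu r * indicator {0<..} r * (g x * indicator {x. sqnorm d x \<le> r\<^sup>2} x) \<partial>euclid d)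
       = nu r * indicator {0<..} r * ennreal (r ^ (Suc d + s)) * ball_integral d g"
      by (cases "r > 0") (auto simp: nn_integral_cmult nn_integral_ball_scale[OF h g] mult.assoc)
  qed
  also have "\<dots> = (\<integral>\<^sup>+r. nu r * indicator {0<..} r * ennreal (r ^ (Suc d + s)) \<partial>lborel) * ball_integral d g"
    by (rule nn_integral_multc) measurable
  finally show ?thesis .
qed

section \<open>Radial integrals\<close>

lemma pos_and_le_square_iff:
  fixes a r :: real
  assumes "a \<ge> 0" "r \<noteq> 0"
  shows "(0 < r \<and> a \<le> r\<^sup>2) \<longleftrightarrow> sqrt a \<le> r"
proof
  assume "0 < r \<and> a \<le> r\<^sup>2"
  then show "sqrt a \<le> r"
    using real_le_lsqrt by auto
next
  assume le: "sqrt a \<le> r"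
  have "0 \<le> sqrt a"
    using assms(1) by simp
  then have "0 < r"
    using le assms(2) by linarith
  then show "0 < r \<and> a \<le> r\<^sup>2"
    using sqrt_le_D[OF le] by simp
qed

lemma AE_indicator_pos_le_square:
  fixes a :: real
  assumes "a \<ge> 0"
  shows "AE r in lborel. indicator {0<..} r * indicator {r. a \<le> r\<^sup>2} r = (indicator {sqrt a..} r :: ennreal)"
  using AE_lborel_singleton[of 0]
proof eventually_elim
  case (elim r)
  then show ?case
    using pos_and_le_square_iff[OF assms elim] by (simp add: indicator_def of_bool_conj[symmetric])
qed

lemma nn_integral_gauss_tail:
  fixes a :: real
  assumes a: "a \<ge> 0"
  shows "(\<integral>\<^sup>+r. ennreal (2*r*exp (- r\<^sup>2)) * indicator {0<..} r * indicator {r. a \<le> r\<^sup>2} r \<partial>lborel)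
       = ennreal (exp (-a))"
proof -
  have "(\<integral>\<^sup>+r. ennreal (2*r*exp (- r\<^sup>2)) * indicator {0<..} r * indicator {r. a \<le> r\<^sup>2} r \<partial>lborel)
      = (\<integral>\<^sup>+r\<in>{sqrt a..}. ennreal (2*r*exp (- r\<^sup>2)) \<partial>lborel)"
    using AE_indicator_pos_le_square[OF a]
    by (intro nn_integral_cong_AE) (auto simp: mult.assoc elim: eventually_mono)
  also have "\<dots> = ennreal (0 - (- exp (- (sqrt a)\<^sup>2)))"
  proof (rule nn_integral_FTC_atLeast)
    show "((\<lambda>r::real. - exp (- r\<^sup>2)) has_real_derivative 2*x*exp (- x\<^sup>2)) (at x)" for x
      by (auto intro!: derivative_eq_intros)
    show "0 \<le> 2*x*exp (- x\<^sup>2)" if "sqrt a \<le> x" for x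
    proof -
      have "0 \<le> x"
        using real_sqrt_ge_zero[OF a] that by linarith
      then show ?thesis
        by simp
    qed
    have "((\<lambda>r::real. - exp (- r\<^sup>2)) \<longlongrightarrow> - 0) at_top"
      by (intro tendsto_minus filterlim_compose[OF exp_at_bot]
                 filterlim_compose[OF filterlim_uminus_at_bot_at_top]
                 filterlim_pow_at_top filterlim_ident) auto
    then show "((\<lambda>r::real. - exp (- r\<^sup>2)) \<longlongrightarrow> 0) at_top"
      by simp
  qed simp
  finally show ?thesis
    using a by simp
qed

lemma nn_integral_power_tail:
  fixes a :: real
  assumes a: "a \<ge> 0"
  shows "(\<integral>\<^sup>+r. ennreal (real (2*q) * r^(2*q-1)) * indicator {..1} r * indicator {0<..} r
            * indicator {r. a \<le> r\<^sup>2} r \<partial>lborel) = ennreal (1 - a^q)"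
proof (cases "a \<le> 1")
  case True
  have "(\<integral>\<^sup>+r. ennreal (real (2*q) * r^(2*q-1)) * indicator {..1} r * indicator {0<..} r
            * indicator {r. a \<le> r\<^sup>2} r \<partial>lborel)
      = (\<integral>\<^sup>+r\<in>{sqrt a..1}. ennreal (real (2*q) * r^(2*q-1)) \<partial>lborel)"
  proof (intro nn_integral_cong_AE, use AE_indicator_pos_le_square[OF a] in \<open>elim eventually_mono\<close>)
    fix r :: real
    assume "indicator {0<..} r * indicator {r. a \<le> r\<^sup>2} r = (indicator {sqrt a..} r :: ennreal)"
    then have "ennreal (real (2*q) * r^(2*q-1)) * indicator {..1} r * indicator {0<..} r * indicator {r. a \<le> r\<^sup>2} r
        = ennreal (real (2*q) * r^(2*q-1)) * indicator {..1} r * indicator {sqrt a..} r"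
      by (simp add: mult.assoc)
    then show "ennreal (real (2*q) * r^(2*q-1)) * indicator {..1} r * indicator {0<..} r * indicator {r. a \<le> r\<^sup>2} r
        = ennreal (real (2*q) * r^(2*q-1)) * indicator {sqrt a..1} r"
      by (auto simp: indicator_def)
  qed
  also have "\<dots> = ennreal (1 ^ (2*q) - (sqrt a) ^ (2*q))"
  proof (rule nn_integral_FTC_Icc)
    show "((\<lambda>r::real. r ^ (2*q)) has_real_derivative real (2*q) * x^(2*q-1)) (at x)" for x
      using DERIV_pow[of "2*q" x] by simp
    show "x \<in> {sqrt a..1} \<Longrightarrow> 0 \<le> real (2*q) * x^(2*q-1)" for x
      using a by (simp add: order_trans[OF real_sqrt_ge_zero])
  qed (use True in simp_all)
  also have "(sqrt a) ^ (2*q) = a ^ q"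
    using a by (simp add: power_mult)
  finally show ?thesis by simp
next
  case False
  have "ennreal (real (2*q) * r^(2*q-1)) * indicator {..1} r * indicator {0<..} r * indicator {r. a \<le> r\<^sup>2} r = 0"
    for r :: real
    using False power_le_one[of r 2] by (auto simp: indicator_def)
  moreover have "1 \<le> a^q"
    using False by (simp add: one_le_power)
  ultimately show ?thesis
    by (simp add: ennreal_eq_0_iff del: mult_eq_0_iff)
qed

lemma nn_integral_power_unit:
  assumes s: "s \<ge> 1"
  shows "(\<integral>\<^sup>+r. ennreal (real s * r^(s-1)) * indicator {..1} r * indicator {0<..} r * ennreal (r ^ n) \<partial>lborel)
     = ennreal (real s / (real s + real n))"
proof -
  have "(\<integral>\<^sup>+r. ennreal (real s * r^(s-1)) * indicator {..1} r * indicator {0<..} r * ennreal (r ^ n) \<partial>lborel)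
      = (\<integral>\<^sup>+r\<in>{0..1}. ennreal (real s * r^(s-1+n)) \<partial>lborel)"
    using AE_lborel_singleton[of 0]
    by (intro nn_integral_cong_AE, eventually_elim)
       (auto simp: indicator_def ennreal_mult[symmetric] power_add)
  also have "\<dots> = ennreal (real s / (real s + real n) * 1 ^ (s + n) - real s / (real s + real n) * 0 ^ (s + n))"
  proof (rule nn_integral_FTC_Icc)
    show "((\<lambda>r::real. real s / (real s + real n) * r ^ (s + n)) has_real_derivative real s * x^(s-1+n)) (at x)"
      for x
    proof -
      have "((\<lambda>r::real. real s / (real s + real n) * r ^ (s + n)) has_real_derivative
              real s / (real s + real n) * (real (s + n) * x ^ (s + n - 1))) (at x)"
        using DERIV_pow[of "s + n" x] by (intro DERIV_cmult) simp
      moreover have "real s / (real s + real n) * (real (s + n) * x ^ (s + n - 1)) = real s * x^(s-1+n)"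
        using s by (simp add: field_simps)
      ultimately show ?thesis by simp
    qed
  qed simp_all
  also have "\<dots> = ennreal (real s / (real s + real n))"
    using s by (simp add: zero_power)
  finally show ?thesis .
qed

definition half_gauss_moment :: "nat \<Rightarrow> real" where
  "half_gauss_moment a =
     (if even a then sqrt pi / 2 * (fact a / (2 ^ a * fact (a div 2))) else fact (a div 2) / 2)"

lemma has_bochner_integral_half_gauss_moment:
  "has_bochner_integral lborel (\<lambda>x::real. indicator {0..} x *\<^sub>R (exp (- x\<^sup>2) * x ^ a)) (half_gauss_moment a)"
proof (cases "even a")
  case True
  then obtain k where "a = 2 * k" by blast
  then show ?thesis
    using gaussian_moment_even_pos[of k] by (simp add: half_gauss_moment_def)
next
  case False
  then obtain k where "a = 2 * k + 1" using oddE by blast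
  then show ?thesis
    using gaussian_moment_odd_pos[of k] by (simp add: half_gauss_moment_def)
qed

lemma half_gauss_moment_pos: "half_gauss_moment a > 0"
  by (simp add: half_gauss_moment_def)

lemma half_gauss_moment_add_two: "half_gauss_moment (a + 2) = (real a + 1) / 2 * half_gauss_moment a"
proof (cases "even a")
  case True
  then obtain k where k: "a = 2 * k" by blast
  have "fact (2*k+2) = (2*real k+1) * (2 * ((real k + 1) * (fact (2*k) :: real)))"
    by (simp add: fact_Suc algebra_simps)
  moreover have "(2::real)^(2*k+2) * fact (k+1) = 2 * (2 * ((real k + 1) * (2^(2*k) * fact k)))"
    by (simp add: algebra_simps)
  ultimately have "fact (2*k+2) / (2^(2*k+2) * fact (k+1))
      = (2*real k+1) / 2 * (fact (2*k) / (2^(2*k) * fact k) :: real)"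
    by (simp only: mult_divide_mult_cancel_left_if) (simp add: mult_ac)
  then show ?thesis
    using k by (simp add: half_gauss_moment_def)
next
  case False
  then obtain k where "a = 2 * k + 1" using oddE by blast
  moreover have "fact (k+1) = (real k + 1) * (fact k :: real)"
    by (simp add: algebra_simps)
  ultimately show ?thesis
    by (simp add: half_gauss_moment_def field_simps)
qed

lemma half_gauss_moment_add_even:
  "half_gauss_moment (a + 2*q) = half_gauss_moment a * pochhammer ((real a + 1) / 2) q"
proof (induction q)
  case (Suc q)
  have "a + 2 * Suc q = (a + 2*q) + 2"
    by simp
  then have "half_gauss_moment (a + 2 * Suc q) = (real (a + 2*q) + 1) / 2 * half_gauss_moment (a + 2*q)"
    by (subst \<open>a + 2 * Suc q = (a + 2*q) + 2\<close>) (rule half_gauss_moment_add_two)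
  then show ?case
    using Suc.IH by (simp add: pochhammer_rec' field_simps)
qed simp

lemma nn_integral_gauss_radial:
  "(\<integral>\<^sup>+r. ennreal (2*r*exp (- r\<^sup>2)) * indicator {0<..} r * ennreal (r ^ n) \<partial>lborel)
     = ennreal (2 * half_gauss_moment (n + 1))"
proof -
  have "(\<integral>\<^sup>+r. ennreal (2*r*exp (- r\<^sup>2)) * indicator {0<..} r * ennreal (r ^ n) \<partial>lborel)
      = (\<integral>\<^sup>+r. ennreal (2 * (indicator {0..} r *\<^sub>R (exp (- r\<^sup>2) * r ^ (n + 1)))) \<partial>lborel)"
    using AE_lborel_singleton[of 0]
    by (intro nn_integral_cong_AE, eventually_elim)
       (auto simp: indicator_def ennreal_mult[symmetric] mult_ac)
  also have "\<dots> = ennreal (2 * half_gauss_moment (n + 1))"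
  proof -
    have "has_bochner_integral lborel (\<lambda>r. 2 * (indicator {0..} r *\<^sub>R (exp (- r\<^sup>2) * r ^ (n + 1))))
        (2 * half_gauss_moment (n + 1))"
      by (intro has_bochner_integral_mult_right has_bochner_integral_half_gauss_moment)
    then show ?thesis
      using half_gauss_moment_pos[of "n + 1"]
      by (subst nn_integral_eq_integrable) (auto simp: has_bochner_integral_iff indicator_def)
  qed
  finally show ?thesis .
qed

text \<open>The moment E |G|^(2q) of a Gaussian vector G in R^n with independent N(0, 1/2) coordinates:
  |G|^2 is Gamma distributed with shape n/2.\<close>
definition gauss_sqnorm_moment :: "nat \<Rightarrow> nat \<Rightarrow> real" where
  "gauss_sqnorm_moment n q = pochhammer (real n / 2) q"

lemma gauss_sqnorm_moment_pos: "n > 0 \<Longrightarrow> gauss_sqnorm_moment n q > 0"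
  unfolding gauss_sqnorm_moment_def by (intro pochhammer_pos) simp

lemma half_gauss_moment_ratio:
  "half_gauss_moment (n + 2*q + 1) * real n
     = gauss_sqnorm_moment n q * half_gauss_moment (n + 1) * (real n + 2 * real q)"
proof -
  have "real n * pochhammer (real n / 2 + 1) q = 2 * pochhammer (real n / 2) (Suc q)"
    by (simp add: pochhammer_rec)
  also have "\<dots> = gauss_sqnorm_moment n q * (real n + 2 * real q)"
    unfolding gauss_sqnorm_moment_def pochhammer_rec' by (simp add: algebra_simps)
  finally have "real n * pochhammer (real n / 2 + 1) q = gauss_sqnorm_moment n q * (real n + 2 * real q)" .
  moreover have "half_gauss_moment (n + 2*q + 1) = half_gauss_moment (n + 1) * pochhammer (real n / 2 + 1) q"
    using half_gauss_moment_add_even[of "n + 1" q] by (simp add: algebra_simps add_divide_distrib)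
  ultimately show ?thesis
    by (simp add: mult_ac)
qed

section \<open>The Gaussian vector\<close>

text \<open>Variance 1/2 makes the density of the Gaussian vector pi^(-(d+1)/2) exp(-|x|^2).\<close>
definition gauss_sd :: real where
  "gauss_sd = sqrt (1/2)"

definition gauss_line :: "real measure" where
  "gauss_line = density lborel (normal_density 0 gauss_sd)"

definition gauss_euclid :: "nat \<Rightarrow> (nat \<Rightarrow> real) measure" where
  "gauss_euclid d = PiM {..d} (\<lambda>_. gauss_line)"

lemma gauss_sd_pos: "gauss_sd > 0"
  by (simp add: gauss_sd_def)

lemma gauss_sd_square: "gauss_sd\<^sup>2 = 1/2"
  by (simp add: gauss_sd_def)

lemma prob_space_gauss_line: "prob_space gauss_line"
  unfolding gauss_line_def using gauss_sd_pos by (intro prob_space_normal_density) simp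

lemma prob_space_gauss_euclid: "prob_space (gauss_euclid d)"
  unfolding gauss_euclid_def by (intro prob_space_PiM) (simp add: prob_space_gauss_line)

lemma sets_gauss_euclid: "sets (gauss_euclid d) = sets (euclid d)"
  unfolding gauss_euclid_def euclid_def gauss_line_def by (intro sets_PiM_cong) auto

lemma space_gauss_euclid: "space (gauss_euclid d) = space (euclid d)"
  using sets_gauss_euclid sets_eq_imp_space_eq by blast

definition gauss_density :: "nat \<Rightarrow> (nat \<Rightarrow> real) \<Rightarrow> real" where
  "gauss_density d x = (1 / sqrt pi) ^ Suc d * exp (- sqnorm d x)"

lemma measurable_gauss_density[measurable]: "gauss_density d \<in> borel_measurable (euclid d)"
  unfolding gauss_density_def by measurable

lemma gauss_density_eq_prod: "gauss_density d x = (\<Prod>i\<in>{..d}. normal_density 0 gauss_sd (x i))"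
proof -
  have "(\<Prod>i\<in>{..d}. normal_density 0 gauss_sd (x i)) = (\<Prod>i\<in>{..d}. (1 / sqrt pi) * exp (- (x i)\<^sup>2))"
    using gauss_sd_pos by (intro prod.cong refl) (simp add: normal_density_def gauss_sd_square)
  also have "\<dots> = (1 / sqrt pi) ^ Suc d * (\<Prod>i\<in>{..d}. exp (- (x i)\<^sup>2))"
    by (subst prod.distrib) simp
  also have "(\<Prod>i\<in>{..d}. exp (- (x i)\<^sup>2)) = exp (- sqnorm d x)"
    unfolding sqnorm_def by (simp add: exp_sum[symmetric] sum_negf)
  finally show ?thesis
    unfolding gauss_density_def by simp
qed

lemma indicator_PiE_eq_prod:
  assumes "x \<in> extensional I" "finite I"
  shows "indicator (Pi\<^sub>E I A) x = (\<Prod>i\<in>I. indicator (A i) (x i) :: ennreal)"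
proof (cases "\<forall>i\<in>I. x i \<in> A i")
  case True
  then show ?thesis
    using assms by (simp add: indicator_def PiE_def)
next
  case False
  then obtain i where i: "i \<in> I" "x i \<notin> A i"
    by blast
  then have "(\<Prod>i\<in>I. indicator (A i) (x i) :: ennreal) = 0"
    using assms(2) by (intro prod_zero) (auto intro!: bexI[of _ i])
  moreover have "x \<notin> Pi\<^sub>E I A"
    using i by (auto simp: PiE_def)
  ultimately show ?thesis
    by simp
qed

lemma gauss_euclid_eq_density: "gauss_euclid d = density (euclid d) (\<lambda>x. ennreal (gauss_density d x))"
proof -
  interpret gauss_product: product_sigma_finite "\<lambda>_::nat. gauss_line"
    unfolding product_sigma_finite_def
    by (intro allI prob_space_imp_sigma_finite[OF prob_space_gauss_line])
  show ?thesis
    unfolding gauss_euclid_def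
  proof (rule gauss_product.PiM_eqI[symmetric])
    show "sets (density (euclid d) (\<lambda>x. ennreal (gauss_density d x))) = sets (Pi\<^sub>M {..d} (\<lambda>_. gauss_line))"
      unfolding euclid_def sets_density by (intro sets_PiM_cong) (auto simp: gauss_line_def)
    fix A :: "nat \<Rightarrow> real set" assume "\<And>i. i \<in> {..d} \<Longrightarrow> A i \<in> sets gauss_line"
    then have A: "\<And>i. i \<in> {..d} \<Longrightarrow> A i \<in> sets lborel"
      by (simp add: gauss_line_def)
    have "Pi\<^sub>E {..d} A \<in> sets (euclid d)"
      unfolding euclid_def using A by (intro sets_PiM_I_finite) auto
    then have "emeasure (density (euclid d) (\<lambda>x. ennreal (gauss_density d x))) (Pi\<^sub>E {..d} A)
        = (\<integral>\<^sup>+x. ennreal (gauss_density d x) * indicator (Pi\<^sub>E {..d} A) x \<partial>euclid d)"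
      by (subst emeasure_density) (auto simp: gauss_density_def)
    also have "\<dots> = (\<integral>\<^sup>+x. (\<Prod>i\<in>{..d}. ennreal (normal_density 0 gauss_sd (x i)) * indicator (A i) (x i)) \<partial>euclid d)"
    proof (intro nn_integral_cong)
      fix x assume "x \<in> space (euclid d)"
      then have "indicator (Pi\<^sub>E {..d} A) x = (\<Prod>i\<in>{..d}. indicator (A i) (x i) :: ennreal)"
        by (intro indicator_PiE_eq_prod) (auto simp: space_euclid PiE_def)
      then show "ennreal (gauss_density d x) * indicator (Pi\<^sub>E {..d} A) x
          = (\<Prod>i\<in>{..d}. ennreal (normal_density 0 gauss_sd (x i)) * indicator (A i) (x i))"
        by (simp add: gauss_density_eq_prod prod_ennreal prod.distrib)
    qed
    also have "\<dots> = (\<Prod>i\<in>{..d}. \<integral>\<^sup>+t. ennreal (normal_density 0 gauss_sd t) * indicator (A i) t \<partial>lborel)"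
      unfolding euclid_def using A by (intro lborel_product.product_nn_integral_prod) auto
    also have "\<dots> = (\<Prod>i\<in>{..d}. emeasure gauss_line (A i))"
      unfolding gauss_line_def using A by (intro prod.cong refl) (simp add: emeasure_density)
    finally show "emeasure (density (euclid d) (\<lambda>x. ennreal (gauss_density d x))) (Pi\<^sub>E {..d} A)
        = (\<Prod>i\<in>{..d}. emeasure gauss_line (A i))" .
  qed simp
qed

definition gauss_ball_const :: "nat \<Rightarrow> nat \<Rightarrow> real" where
  "gauss_ball_const d s = (1 / sqrt pi) ^ Suc d * (2 * half_gauss_moment (Suc d + s + 1))"

lemma gauss_ball_const_pos: "gauss_ball_const d s > 0"
  unfolding gauss_ball_const_def using half_gauss_moment_pos by simp

lemma gauss_ball_const_ratio:
  "real (Suc d) / (real (Suc d) + 2 * real q) * gauss_ball_const d (2*q)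
     = gauss_sqnorm_moment (Suc d) q * gauss_ball_const d 0"
proof -
  have key: "real (Suc d) / (real (Suc d) + 2 * real q) * half_gauss_moment (Suc d + 2*q + 1)
      = gauss_sqnorm_moment (Suc d) q * half_gauss_moment (Suc d + 0 + 1)"
    using half_gauss_moment_ratio[of "Suc d" q] by (simp add: field_simps)
  have "real (Suc d) / (real (Suc d) + 2 * real q) * gauss_ball_const d (2*q)
      = (1 / sqrt pi) ^ Suc d * 2 * (real (Suc d) / (real (Suc d) + 2 * real q) * half_gauss_moment (Suc d + 2*q + 1))"
    unfolding gauss_ball_const_def by (simp only: ac_simps)
  also have "\<dots> = (1 / sqrt pi) ^ Suc d * 2 * (gauss_sqnorm_moment (Suc d) q * half_gauss_moment (Suc d + 0 + 1))"
    by (simp only: key)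
  also have "\<dots> = gauss_sqnorm_moment (Suc d) q * gauss_ball_const d 0"
    unfolding gauss_ball_const_def by (simp only: ac_simps)
  finally show ?thesis .
qed

text \<open>exp(-|x|^2) is the integral of 2r exp(-r^2) over r > |x|: the Gaussian density is a
  superposition of indicators of balls.\<close>
lemma nn_integral_gauss_euclid_homogeneous:
  assumes h: "pos_homogeneous d s g" and g[measurable]: "g \<in> borel_measurable (euclid d)"
  shows "(\<integral>\<^sup>+x. g x \<partial>gauss_euclid d) = ennreal (gauss_ball_const d s) * ball_integral d g"
proof -
  have const: "ennreal (gauss_ball_const d s)
      = ennreal ((1 / sqrt pi) ^ Suc d) * ennreal (2 * half_gauss_moment (Suc d + s + 1))"
    unfolding gauss_ball_const_def using half_gauss_moment_pos[of "Suc d + s + 1"]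
    by (intro ennreal_mult) auto
  let ?layers = "\<lambda>x. \<integral>\<^sup>+r. ennreal (2*r*exp (- r\<^sup>2)) * indicator {0<..} r * indicator {x. sqnorm d x \<le> r\<^sup>2} x \<partial>lborel"
  have "(\<integral>\<^sup>+x. g x \<partial>gauss_euclid d) = (\<integral>\<^sup>+x. ennreal (gauss_density d x) * g x \<partial>euclid d)"
    unfolding gauss_euclid_eq_density by (subst nn_integral_density) auto
  also have "\<dots> = (\<integral>\<^sup>+x. ennreal ((1 / sqrt pi) ^ Suc d) * (g x * ?layers x) \<partial>euclid d)"
  proof (intro nn_integral_cong)
    fix x
    have "?layers x = ennreal (exp (- sqnorm d x))"
      using nn_integral_gauss_tail[OF sqnorm_nonneg[of d x]] by (simp add: indicator_def)
    moreover have "ennreal (gauss_density d x) = ennreal ((1 / sqrt pi) ^ Suc d) * ennreal (exp (- sqnorm d x))"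
      unfolding gauss_density_def by (intro ennreal_mult) auto
    ultimately show "ennreal (gauss_density d x) * g x = ennreal ((1 / sqrt pi) ^ Suc d) * (g x * ?layers x)"
      by (simp add: mult_ac)
  qed
  also have "\<dots> = ennreal ((1 / sqrt pi) ^ Suc d) * (\<integral>\<^sup>+x. g x * ?layers x \<partial>euclid d)"
    by (rule nn_integral_cmult) measurable
  also have "(\<integral>\<^sup>+x. g x * ?layers x \<partial>euclid d) = ennreal (2 * half_gauss_moment (Suc d + s + 1)) * ball_integral d g"
  proof -
    have "(\<integral>\<^sup>+x. g x * ?layers x \<partial>euclid d)
        = (\<integral>\<^sup>+r. ennreal (2*r*exp (- r\<^sup>2)) * indicator {0<..} r * ennreal (r ^ (Suc d + s)) \<partial>lborel)
          * ball_integral d g"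
      by (rule nn_integral_radial_layers[OF h g]) measurable
    then show ?thesis
      by (simp only: nn_integral_gauss_radial)
  qed
  finally show ?thesis
    unfolding const by (simp only: mult.assoc)
qed

lemma indicator_sqnorm_le_one_split:
  assumes "q \<ge> 1"
  shows "indicator {x. sqnorm d x \<le> 1} x
       = ennreal (sqnorm d x ^ q) * indicator {x. sqnorm d x \<le> 1} x + ennreal (1 - sqnorm d x ^ q)"
proof (cases "sqnorm d x \<le> 1")
  case True
  then have "sqnorm d x ^ q \<le> 1"
    using sqnorm_nonneg[of d x] by (simp add: power_le_one)
  then show ?thesis
    using True sqnorm_nonneg[of d x] by (simp add: ennreal_plus[symmetric] del: ennreal_plus)
next
  case False
  then have "1 \<le> sqnorm d x ^ q"
    using assms by (simp add: one_le_power)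
  then show ?thesis
    using False by (simp add: ennreal_eq_0_iff)
qed

lemma nn_integral_mult_one_minus_sqnorm_power:
  assumes h: "pos_homogeneous d 0 f" and f[measurable]: "f \<in> borel_measurable (euclid d)"
    and q: "q \<ge> 1"
  shows "(\<integral>\<^sup>+x. f x * ennreal (1 - sqnorm d x ^ q) \<partial>euclid d)
       = ennreal (real (2*q) / (real (2*q) + real (Suc d))) * ball_integral d f"
proof -
  let ?nu = "\<lambda>r::real. ennreal (real (2*q) * r^(2*q-1)) * indicator {..1} r"
  have "ennreal (1 - sqnorm d x ^ q)
      = (\<integral>\<^sup>+r. ?nu r * indicator {0<..} r * indicator {x. sqnorm d x \<le> r\<^sup>2} x \<partial>lborel)" for x
  proof -
    have "(\<integral>\<^sup>+r. ?nu r * indicator {0<..} r * indicator {x. sqnorm d x \<le> r\<^sup>2} x \<partial>lborel)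
        = (\<integral>\<^sup>+r. ?nu r * indicator {0<..} r * indicator {r. sqnorm d x \<le> r\<^sup>2} r \<partial>lborel)"
      by (simp add: indicator_def)
    then show ?thesis
      using nn_integral_power_tail[OF sqnorm_nonneg[of d x], of q] by (simp only:)
  qed
  then have "(\<integral>\<^sup>+x. f x * ennreal (1 - sqnorm d x ^ q) \<partial>euclid d)
      = (\<integral>\<^sup>+r. ?nu r * indicator {0<..} r * ennreal (r ^ (Suc d + 0)) \<partial>lborel) * ball_integral d f"
    by (simp only:) (rule nn_integral_radial_layers[OF h f], measurable)
  also have "(\<integral>\<^sup>+r. ?nu r * indicator {0<..} r * ennreal (r ^ (Suc d + 0)) \<partial>lborel)
      = ennreal (real (2*q) / (real (2*q) + real (Suc d)))"
    using nn_integral_power_unit[of "2*q" "Suc d"] q by simp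
  finally show ?thesis .
qed

lemma ball_integral_mult_sqnorm_power:
  assumes h: "pos_homogeneous d 0 f" and f[measurable]: "f \<in> borel_measurable (euclid d)"
    and q: "q \<ge> 1"
  shows "ball_integral d (\<lambda>x. f x * ennreal (sqnorm d x ^ q))
           + ennreal (real (2*q) / (real (2*q) + real (Suc d))) * ball_integral d f
         = ball_integral d f"
proof -
  have "ball_integral d f = (\<integral>\<^sup>+x. f x * ennreal (sqnorm d x ^ q) * indicator {x. sqnorm d x \<le> 1} x
        + f x * ennreal (1 - sqnorm d x ^ q) \<partial>euclid d)"
    unfolding ball_integral_def
    by (intro nn_integral_cong) (subst indicator_sqnorm_le_one_split[OF q], simp add: distrib_left mult.assoc)
  also have "\<dots> = ball_integral d (\<lambda>x. f x * ennreal (sqnorm d x ^ q)) +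
      (\<integral>\<^sup>+x. f x * ennreal (1 - sqnorm d x ^ q) \<partial>euclid d)"
    unfolding ball_integral_def by (intro nn_integral_add) measurable
  finally show ?thesis
    unfolding nn_integral_mult_one_minus_sqnorm_power[OF h f q] by (rule sym)
qed

lemma ennreal_add_mult_eq_cancel:
  assumes "x + ennreal a * ennreal t = ennreal t" "0 \<le> a" "0 \<le> t"
  shows "x = ennreal ((1 - a) * t)"
proof -
  have "x \<noteq> \<infinity>"
    using assms(1) by auto
  then obtain x' where x': "x = ennreal x'" "0 \<le> x'"
    by (cases x) auto
  then have "x' + a * t = t"
    using assms by (simp add: ennreal_mult[symmetric] ennreal_plus[symmetric] del: ennreal_plus)
  then show ?thesis
    using x' by (simp add: algebra_simps)
qed

lemma nn_integral_gauss_euclid_mult_sqnorm_power: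
  assumes h: "pos_homogeneous d 0 f" and f[measurable]: "f \<in> borel_measurable (euclid d)"
    and fin: "(\<integral>\<^sup>+x. f x \<partial>gauss_euclid d) \<noteq> \<infinity>"
  shows "(\<integral>\<^sup>+x. f x * ennreal (sqnorm d x ^ q) \<partial>gauss_euclid d)
       = ennreal (gauss_sqnorm_moment (Suc d) q) * (\<integral>\<^sup>+x. f x \<partial>gauss_euclid d)"
proof (cases "q = 0")
  case False
  define a where "a = real (2*q) / (real (2*q) + real (Suc d))"
  define C0 where "C0 = gauss_ball_const d 0"
  define Cq where "Cq = gauss_ball_const d (2*q)"
  define R where "R = gauss_sqnorm_moment (Suc d) q"
  have pos: "0 < C0" "0 < Cq" "0 < R" "0 \<le> a" "a \<le> 1"
    unfolding C0_def Cq_def R_def a_def by (auto simp: gauss_ball_const_pos gauss_sqnorm_moment_pos)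
  have int_f: "(\<integral>\<^sup>+x. f x \<partial>gauss_euclid d) = ennreal C0 * ball_integral d f"
    unfolding C0_def by (rule nn_integral_gauss_euclid_homogeneous[OF h f])
  then have "ball_integral d f \<noteq> \<infinity>"
    using fin pos by (auto simp: ennreal_mult_eq_top_iff)
  then obtain t where t: "ball_integral d f = ennreal t" "0 \<le> t"
    by (cases "ball_integral d f") auto
  have ball_fq: "ball_integral d (\<lambda>x. f x * ennreal (sqnorm d x ^ q)) = ennreal ((1 - a) * t)"
    using ball_integral_mult_sqnorm_power[OF h f] False t pos
    by (intro ennreal_add_mult_eq_cancel) (auto simp: a_def)
  have "1 - a = real (Suc d) / (real (Suc d) + 2 * real q)"
    unfolding a_def by (simp add: field_simps)
  then have key: "(1 - a) * Cq = R * C0"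
    unfolding Cq_def R_def C0_def using gauss_ball_const_ratio[of d q] by simp
  have hq: "pos_homogeneous d (2*q) (\<lambda>x. f x * ennreal (sqnorm d x ^ q))"
    using pos_homogeneous_mult_sqnorm_power[OF h] by simp
  have "(\<integral>\<^sup>+x. f x * ennreal (sqnorm d x ^ q) \<partial>gauss_euclid d)
      = ennreal Cq * ball_integral d (\<lambda>x. f x * ennreal (sqnorm d x ^ q))"
    unfolding Cq_def by (rule nn_integral_gauss_euclid_homogeneous[OF hq]) measurable
  also have "\<dots> = ennreal Cq * ennreal ((1 - a) * t)"
    by (simp only: ball_fq)
  also have "\<dots> = ennreal (((1 - a) * Cq) * t)"
    using pos t by (simp add: ennreal_mult[symmetric] mult_ac)
  also have "\<dots> = ennreal R * (ennreal C0 * ennreal t)"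
    using pos t by (simp add: key ennreal_mult mult.assoc)
  finally show ?thesis
    unfolding R_def int_f t(1) .
qed (simp add: gauss_sqnorm_moment_def)

section \<open>Moments on the sphere\<close>

lemma ennreal_eq_divide_of_mult_eq:
  assumes "ennreal a * x = ennreal b" "0 < a" "0 \<le> b"
  shows "x = ennreal (b / a)"
proof -
  have "x = ennreal (1 / a) * (ennreal a * x)"
    using assms(2) by (simp add: ennreal_mult[symmetric] mult.assoc[symmetric])
  then show ?thesis
    using assms by (simp add: ennreal_mult[symmetric])
qed

definition unit_ball :: "nat \<Rightarrow> (nat \<Rightarrow> real) set" where
  "unit_ball d = {x \<in> space (euclid d). sqnorm d x \<le> 1}"

definition sphere_proj :: "nat \<Rightarrow> (nat \<Rightarrow> real) \<Rightarrow> (nat \<Rightarrow> real)" where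
  "sphere_proj d x = (\<lambda>i\<in>{..d}. x i / sqrt (sqnorm d x))"

lemma sphere_unif_eq_distr:
  "sphere_unif d = distr (uniform_measure (euclid d) (unit_ball d)) (euclid d) (sphere_proj d)"
  unfolding sphere_unif_def unit_ball_def sphere_proj_def ..

lemma sets_sphere_unif: "sets (sphere_unif d) = sets (euclid d)"
  unfolding sphere_unif_def by simp

lemma unit_ball_sets[measurable]: "unit_ball d \<in> sets (euclid d)"
  unfolding unit_ball_def by measurable

lemma measurable_sphere_proj[measurable]: "sphere_proj d \<in> euclid d \<rightarrow>\<^sub>M euclid d"
proof -
  have "(\<lambda>x. \<lambda>i\<in>{..d}. x i / sqrt (sqnorm d x)) \<in> euclid d \<rightarrow>\<^sub>M Pi\<^sub>M {..d} (\<lambda>_. lborel)"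
  proof (rule measurable_restrict)
    fix i assume "i \<in> {..d}"
    then have [measurable]: "(\<lambda>x. x i) \<in> borel_measurable (euclid d)"
      unfolding euclid_def by measurable
    show "(\<lambda>x. x i / sqrt (sqnorm d x)) \<in> euclid d \<rightarrow>\<^sub>M lborel"
      by simp measurable
  qed
  then show ?thesis
    unfolding sphere_proj_def by (metis euclid_def)
qed

lemma sphere_proj_euclid_scale:
  assumes "c > 0"
  shows "sphere_proj d (euclid_scale d c x) = sphere_proj d x"
proof -
  have "sqrt (sqnorm d (euclid_scale d c x)) = c * sqrt (sqnorm d x)"
    using assms by (simp add: sqnorm_euclid_scale real_sqrt_mult)
  then show ?thesis
    unfolding sphere_proj_def using assms by (intro ext) (simp add: euclid_scale_def)
qed

lemma pos_homogeneous_comp_sphere_proj: "pos_homogeneous d 0 (\<lambda>x. G (sphere_proj d x))"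
  unfolding pos_homogeneous_def by (simp add: sphere_proj_euclid_scale)

lemma pos_homogeneous_const: "pos_homogeneous d 0 (\<lambda>_. c)"
  unfolding pos_homogeneous_def by simp

lemma sqnorm_sphere_proj: "sqnorm d (sphere_proj d x) = (if sqnorm d x = 0 then 0 else 1)"
proof -
  have "sqnorm d (sphere_proj d x) = (\<Sum>i\<le>d. (x i)\<^sup>2 / sqnorm d x)"
    unfolding sqnorm_def sphere_proj_def
    by (intro sum.cong refl) (simp add: power_divide sqnorm_nonneg[unfolded sqnorm_def])
  also have "\<dots> = sqnorm d x / sqnorm d x"
    unfolding sqnorm_def by (rule sum_divide_distrib[symmetric])
  finally show ?thesis
    by simp
qed

lemma nn_integral_unit_ball: "(\<integral>\<^sup>+x. F x * indicator (unit_ball d) x \<partial>euclid d) = ball_integral d F"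
  unfolding ball_integral_def unit_ball_def by (intro nn_integral_cong) (simp add: indicator_def)

lemma emeasure_unit_ball: "emeasure (euclid d) (unit_ball d) = ennreal (1 / gauss_ball_const d 0)"
proof -
  have "1 = ennreal (gauss_ball_const d 0) * ball_integral d (\<lambda>_. 1)"
    using nn_integral_gauss_euclid_homogeneous[OF pos_homogeneous_const[of d 1]]
      prob_space.emeasure_space_1[OF prob_space_gauss_euclid]
    by simp
  then have "ball_integral d (\<lambda>_. 1) = ennreal (1 / gauss_ball_const d 0)"
    using gauss_ball_const_pos[of d 0] by (intro ennreal_eq_divide_of_mult_eq) simp_all
  then show ?thesis
    unfolding nn_integral_unit_ball[symmetric] by simp
qed

lemma prob_space_sphere_unif: "prob_space (sphere_unif d)"
proof -
  have "prob_space (uniform_measure (euclid d) (unit_ball d))"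
    using gauss_ball_const_pos[of d 0] by (intro prob_space_uniform_measure) (simp_all add: emeasure_unit_ball)
  then show ?thesis
    unfolding sphere_unif_eq_distr by (rule prob_space.prob_space_distr) simp
qed

text \<open>The uniform distribution on the ball and the Gaussian distribution are both mixtures of
  uniform distributions on balls, so their radial projections agree.\<close>
lemma nn_integral_sphere_unif:
  assumes [measurable]: "G \<in> borel_measurable (euclid d)"
  shows "(\<integral>\<^sup>+x. G x \<partial>sphere_unif d) = (\<integral>\<^sup>+x. G (sphere_proj d x) \<partial>gauss_euclid d)"
proof -
  have "(\<integral>\<^sup>+x. G x \<partial>sphere_unif d) = (\<integral>\<^sup>+x. G (sphere_proj d x) \<partial>uniform_measure (euclid d) (unit_ball d))"
    unfolding sphere_unif_eq_distr by (subst nn_integral_distr) auto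
  also have "\<dots> = ball_integral d (\<lambda>x. G (sphere_proj d x)) / emeasure (euclid d) (unit_ball d)"
    by (subst nn_integral_uniform_measure) (auto simp: nn_integral_unit_ball)
  also have "\<dots> = ennreal (gauss_ball_const d 0) * ball_integral d (\<lambda>x. G (sphere_proj d x))"
    using gauss_ball_const_pos[of d 0]
    by (simp add: emeasure_unit_ball divide_ennreal_def ennreal_inverse_positive inverse_ennreal mult.commute)
  also have "\<dots> = (\<integral>\<^sup>+x. G (sphere_proj d x) \<partial>gauss_euclid d)"
    by (rule nn_integral_gauss_euclid_homogeneous[OF pos_homogeneous_comp_sphere_proj, symmetric]) simp
  finally show ?thesis .
qed

lemma distr_gauss_euclid_component: "i \<le> d \<Longrightarrow> distr (gauss_euclid d) gauss_line (\<lambda>y. y i) = gauss_line"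
  unfolding gauss_euclid_def by (rule distr_PiM_component) (auto simp: prob_space_gauss_line)

lemma distr_gauss_euclid_component_borel:
  "i \<le> d \<Longrightarrow> distr (gauss_euclid d) borel (\<lambda>y. y i) = gauss_line"
  using distr_gauss_euclid_component[of i d] by (simp add: gauss_line_def cong: distr_cong)

lemma indep_vars_gauss_euclid_components:
  "prob_space.indep_vars (gauss_euclid d) (\<lambda>_. borel) (\<lambda>i y. y i) {..d}"
proof -
  interpret prob_space "gauss_euclid d"
    by (rule prob_space_gauss_euclid)
  have "distr (gauss_euclid d) (Pi\<^sub>M {..d} (\<lambda>_. borel)) (\<lambda>x. \<lambda>i\<in>{..d}. x i)
      = distr (gauss_euclid d) (gauss_euclid d) (\<lambda>x. x)"
  proof (rule distr_cong)
    show "sets (Pi\<^sub>M {..d} (\<lambda>_. borel)) = sets (gauss_euclid d)"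
      unfolding gauss_euclid_def gauss_line_def by (intro sets_PiM_cong) auto
    show "x \<in> space (gauss_euclid d) \<Longrightarrow> (\<lambda>i\<in>{..d}. x i) = x" for x
      by (auto simp: space_gauss_euclid space_euclid PiE_def extensional_def)
  qed simp
  also have "\<dots> = Pi\<^sub>M {..d} (\<lambda>i. distr (gauss_euclid d) borel (\<lambda>y. y i))"
    unfolding distr_id2[OF refl] gauss_euclid_def[of d]
    by (rule PiM_cong) (simp_all add: distr_gauss_euclid_component_borel[unfolded gauss_euclid_def])
  finally show ?thesis
    by (subst indep_vars_iff_distr_eq_PiM') (auto simp: gauss_euclid_def gauss_line_def)
qed

lemma distributed_gauss_euclid_component:
  assumes "i \<le> d"
  shows "distributed (gauss_euclid d) lborel (\<lambda>y. y i) (normal_density 0 gauss_sd)"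
  unfolding distributed_def
proof (intro conjI)
  show "distr (gauss_euclid d) lborel (\<lambda>y. y i) = density lborel (\<lambda>x. ennreal (normal_density 0 gauss_sd x))"
    using distr_gauss_euclid_component_borel[OF assms] by (simp add: gauss_line_def cong: distr_cong)
  show "(\<lambda>y. y i) \<in> gauss_euclid d \<rightarrow>\<^sub>M lborel"
    using measurable_component_singleton[of i "{..d}" "\<lambda>_. gauss_line"] assms
    unfolding gauss_euclid_def by (simp add: gauss_line_def cong: measurable_cong_sets)
qed measurable

definition std_normal_moment :: "nat \<Rightarrow> real" where
  "std_normal_moment q = fact (2*q) / (2^q * fact q)"

definition euclid_inner :: "nat \<Rightarrow> (nat \<Rightarrow> real) \<Rightarrow> (nat \<Rightarrow> real) \<Rightarrow> real" where
  "euclid_inner d x y = (\<Sum>i\<le>d. x i * y i)"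

lemma measurable_euclid_inner[measurable]: "euclid_inner d x \<in> borel_measurable (euclid d)"
  unfolding euclid_inner_def[abs_def] euclid_def by (intro borel_measurable_sum) measurable

lemma measurable_euclid_inner_pair:
  "(\<lambda>p. euclid_inner d (fst p) (snd p)) \<in> borel_measurable (euclid d \<Otimes>\<^sub>M euclid d)"
  unfolding euclid_inner_def euclid_def by (intro borel_measurable_sum) measurable

lemma distributed_gauss_euclid_inner:
  assumes "sqnorm d x > 0"
  shows "distributed (gauss_euclid d) lborel (euclid_inner d x) (normal_density 0 (sqrt (sqnorm d x / 2)))"
proof -
  interpret prob_space "gauss_euclid d"
    by (rule prob_space_gauss_euclid)
  define J where "J = {i\<in>{..d}. x i \<noteq> 0}"
  have inner_J: "euclid_inner d x = (\<lambda>y. \<Sum>i\<in>J. x i * y i)"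
    unfolding euclid_inner_def J_def by (intro ext sum.mono_neutral_right) auto
  have sqnorm_J: "sqnorm d x / 2 = (\<Sum>i\<in>J. (\<bar>x i\<bar> * gauss_sd)\<^sup>2)"
    unfolding J_def sqnorm_def
    by (subst sum.mono_neutral_right[of "{..d}"]) (auto simp: power_mult_distrib gauss_sd_square sum_divide_distrib)
  have "J \<noteq> {}"
  proof
    assume "J = {}"
    then have "sqnorm d x = 0"
      unfolding sqnorm_def J_def by (intro sum.neutral) auto
    with assms show False
      by simp
  qed
  moreover have "indep_vars (\<lambda>_. borel) (\<lambda>i y. x i * y i) J"
    using indep_vars_subset[OF indep_vars_gauss_euclid_components, of J]
    by (rule indep_vars_compose2[where Y="\<lambda>i z. x i * z"]) (auto simp: J_def)
  moreover have "distributed (gauss_euclid d) lborel (\<lambda>y. x i * y i) (normal_density 0 (\<bar>x i\<bar> * gauss_sd))"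
    if "i \<in> J" for i
  proof -
    have "distributed (gauss_euclid d) lborel (\<lambda>y. 0 + x i * y i)
        (normal_density (0 + x i * 0) (\<bar>x i\<bar> * gauss_sd))"
      using that
      by (intro normal_density_affine distributed_gauss_euclid_component gauss_sd_pos) (auto simp: J_def)
    then show ?thesis
      by simp
  qed
  ultimately have "distributed (gauss_euclid d) lborel (\<lambda>y. \<Sum>i\<in>J. x i * y i)
      (normal_density (\<Sum>i\<in>J. 0) (sqrt (\<Sum>i\<in>J. (\<bar>x i\<bar> * gauss_sd)\<^sup>2)))"
    using gauss_sd_pos by (intro sum_indep_normal) (auto simp: J_def)
  then show ?thesis
    unfolding inner_J sqnorm_J by simp
qed

lemma nn_integral_gauss_euclid_inner_power:
  "(\<integral>\<^sup>+y. ennreal (euclid_inner d x y ^ (2*q)) \<partial>gauss_euclid d)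
     = ennreal (std_normal_moment q * (sqnorm d x / 2) ^ q)"
proof (cases "sqnorm d x = 0")
  case True
  then have "\<forall>i\<in>{..d}. x i = 0"
    unfolding sqnorm_def by (subst (asm) sum_nonneg_eq_0_iff) auto
  then show ?thesis
    using True prob_space.emeasure_space_1[OF prob_space_gauss_euclid]
    by (cases "q = 0") (simp_all add: euclid_inner_def std_normal_moment_def power_0_left)
next
  case False
  define sg where "sg = sqrt (sqnorm d x / 2)"
  have sg: "sg > 0" "sg\<^sup>2 = sqnorm d x / 2"
    using False sqnorm_nonneg[of d x] unfolding sg_def by (simp_all add: order_less_le)
  have "(\<integral>\<^sup>+y. ennreal (euclid_inner d x y ^ (2*q)) \<partial>gauss_euclid d)
      = (\<integral>\<^sup>+z. ennreal (normal_density 0 sg z * (z - 0) ^ (2*q)) \<partial>lborel)"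
    using distributed_gauss_euclid_inner[of d x] False sqnorm_nonneg[of d x] unfolding sg_def
    by (subst distributed_nn_integral[symmetric])
       (auto simp: ennreal_mult[symmetric] zero_le_even_power order_less_le intro!: nn_integral_cong)
  also have "\<dots> = ennreal (fact (2 * q) / ((2 / sg\<^sup>2)^q * fact q))"
    using normal_moment_even[OF sg(1), of 0 q]
    by (subst nn_integral_eq_integrable)
       (auto simp: has_bochner_integral_iff zero_le_even_power simp del: diff_0_right)
  also have "fact (2 * q) / ((2 / sg\<^sup>2)^q * fact q) = std_normal_moment q * (sqnorm d x / 2) ^ q"
    unfolding sg(2) std_normal_moment_def using False
    by (simp add: field_simps power_divide power_mult_distrib[symmetric])
  finally show ?thesis .
qed

lemma euclid_inner_sphere_proj: "euclid_inner d x (sphere_proj d y) = euclid_inner d x y / sqrt (sqnorm d y)"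
  unfolding euclid_inner_def sphere_proj_def by (simp add: sum_divide_distrib)

lemma euclid_inner_sphere_proj_power:
  "euclid_inner d x (sphere_proj d y) ^ (2*q) * sqnorm d y ^ q = euclid_inner d x y ^ (2*q)"
proof (cases "sqnorm d y = 0")
  case True
  then have "\<forall>i\<in>{..d}. (y i)\<^sup>2 = 0"
    unfolding sqnorm_def by (subst (asm) sum_nonneg_eq_0_iff) auto
  then have "euclid_inner d x y = 0"
    unfolding euclid_inner_def by simp
  then show ?thesis
    using True by (cases "q = 0") (simp_all add: euclid_inner_sphere_proj)
next
  case False
  then show ?thesis
    using sqnorm_nonneg[of d y]
    by (simp add: euclid_inner_sphere_proj power_divide power_mult)
qed

lemma euclid_inner_sphere_proj_square_le: "(euclid_inner d x (sphere_proj d y))\<^sup>2 \<le> sqnorm d x"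
proof -
  have "(euclid_inner d x (sphere_proj d y))\<^sup>2 \<le> sqnorm d x * sqnorm d (sphere_proj d y)"
    unfolding euclid_inner_def sqnorm_def
    using Cauchy_Schwarz_ineq_sum[of x "sphere_proj d y" "{..d}"] by simp
  also have "\<dots> \<le> sqnorm d x"
    using sqnorm_nonneg[of d x] by (simp add: sqnorm_sphere_proj)
  finally show ?thesis .
qed

definition sphere_inner_moment :: "nat \<Rightarrow> nat \<Rightarrow> real" where
  "sphere_inner_moment d q = std_normal_moment q / (2^q * gauss_sqnorm_moment (Suc d) q)"

lemma sphere_inner_moment_nonneg: "sphere_inner_moment d q \<ge> 0"
  unfolding sphere_inner_moment_def std_normal_moment_def
  using gauss_sqnorm_moment_pos[of "Suc d" q] by simp

text \<open>The radius |G| and the direction G/|G| of the Gaussian vector are independent, and the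
  direction is uniform on the sphere.\<close>
lemma nn_integral_sphere_unif_mult_gauss_sqnorm_moment:
  assumes G[measurable]: "G \<in> borel_measurable (euclid d)"
    and bounded: "\<And>y. G (sphere_proj d y) \<le> ennreal B"
  shows "ennreal (gauss_sqnorm_moment (Suc d) q) * (\<integral>\<^sup>+x. G x \<partial>sphere_unif d)
       = (\<integral>\<^sup>+y. G (sphere_proj d y) * ennreal (sqnorm d y ^ q) \<partial>gauss_euclid d)"
proof -
  interpret prob_space "gauss_euclid d"
    by (rule prob_space_gauss_euclid)
  have "(\<integral>\<^sup>+y. G (sphere_proj d y) \<partial>gauss_euclid d) \<le> (\<integral>\<^sup>+y. ennreal B \<partial>gauss_euclid d)"
    using bounded by (intro nn_integral_mono)
  then have fin: "(\<integral>\<^sup>+y. G (sphere_proj d y) \<partial>gauss_euclid d) \<noteq> \<infinity>"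
    using emeasure_space_1 by (auto simp: top_unique)
  show ?thesis
    unfolding nn_integral_sphere_unif[OF G]
    by (rule nn_integral_gauss_euclid_mult_sqnorm_power[OF pos_homogeneous_comp_sphere_proj _ fin, symmetric])
       simp
qed

lemma nn_integral_sphere_unif_inner_power:
  "(\<integral>\<^sup>+y. ennreal (euclid_inner d x y ^ (2*q)) \<partial>sphere_unif d)
     = ennreal (sphere_inner_moment d q * sqnorm d x ^ q)"
proof -
  have bounded: "ennreal (euclid_inner d x (sphere_proj d y) ^ (2*q)) \<le> ennreal (sqnorm d x ^ q)" for y
  proof -
    have "((euclid_inner d x (sphere_proj d y))\<^sup>2) ^ q \<le> sqnorm d x ^ q"
      by (intro power_mono euclid_inner_sphere_proj_square_le) simp
    then show ?thesis
      by (intro ennreal_leI) (simp add: power_mult)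
  qed
  have "ennreal (gauss_sqnorm_moment (Suc d) q) * (\<integral>\<^sup>+y. ennreal (euclid_inner d x y ^ (2*q)) \<partial>sphere_unif d)
      = (\<integral>\<^sup>+y. ennreal (euclid_inner d x (sphere_proj d y) ^ (2*q)) * ennreal (sqnorm d y ^ q) \<partial>gauss_euclid d)"
    by (rule nn_integral_sphere_unif_mult_gauss_sqnorm_moment
        [where G = "\<lambda>y. ennreal (euclid_inner d x y ^ (2*q))"]) (measurable, rule bounded)
  also have "\<dots> = (\<integral>\<^sup>+y. ennreal (euclid_inner d x y ^ (2*q)) \<partial>gauss_euclid d)"
    by (simp add: ennreal_mult[symmetric] zero_le_even_power sqnorm_nonneg euclid_inner_sphere_proj_power)
  also have "\<dots> = ennreal (std_normal_moment q * (sqnorm d x / 2) ^ q)"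
    by (rule nn_integral_gauss_euclid_inner_power)
  finally have "(\<integral>\<^sup>+y. ennreal (euclid_inner d x y ^ (2*q)) \<partial>sphere_unif d)
      = ennreal (std_normal_moment q * (sqnorm d x / 2) ^ q / gauss_sqnorm_moment (Suc d) q)"
    using gauss_sqnorm_moment_pos[of "Suc d" q] sqnorm_nonneg[of d x]
    by (intro ennreal_eq_divide_of_mult_eq) (simp_all add: std_normal_moment_def)
  then show ?thesis
    by (simp add: sphere_inner_moment_def power_divide)
qed

lemma nn_integral_sphere_unif_sqnorm_power: "(\<integral>\<^sup>+x. ennreal (sqnorm d x ^ q) \<partial>sphere_unif d) = 1"
proof -
  interpret prob_space "sphere_unif d"
    by (rule prob_space_sphere_unif)
  have "ennreal (gauss_sqnorm_moment (Suc d) q) * (\<integral>\<^sup>+x. ennreal (sqnorm d x ^ q) \<partial>sphere_unif d)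
      = (\<integral>\<^sup>+y. ennreal (sqnorm d (sphere_proj d y) ^ q) * ennreal (sqnorm d y ^ q) \<partial>gauss_euclid d)"
    by (rule nn_integral_sphere_unif_mult_gauss_sqnorm_moment[where B = 1])
       (auto simp: sqnorm_sphere_proj power_0_left)
  also have "\<dots> = (\<integral>\<^sup>+y. 1 * ennreal (sqnorm d y ^ q) \<partial>gauss_euclid d)"
    by (intro nn_integral_cong) (cases "q = 0", auto simp: sqnorm_sphere_proj power_0_left)
  also have "\<dots> = ennreal (gauss_sqnorm_moment (Suc d) q) * (\<integral>\<^sup>+x. 1 \<partial>sphere_unif d)"
    by (rule nn_integral_sphere_unif_mult_gauss_sqnorm_moment[where B = 1, symmetric]) simp_all
  finally have "ennreal (gauss_sqnorm_moment (Suc d) q) * (\<integral>\<^sup>+x. ennreal (sqnorm d x ^ q) \<partial>sphere_unif d)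
      = ennreal (gauss_sqnorm_moment (Suc d) q)"
    using emeasure_space_1 by simp
  then have "(\<integral>\<^sup>+x. ennreal (sqnorm d x ^ q) \<partial>sphere_unif d)
      = ennreal (gauss_sqnorm_moment (Suc d) q / gauss_sqnorm_moment (Suc d) q)"
    using gauss_sqnorm_moment_pos[of "Suc d" q] by (intro ennreal_eq_divide_of_mult_eq) simp_all
  then show ?thesis
    using gauss_sqnorm_moment_pos[of "Suc d" q] by simp
qed

lemma measurable_euclid_inner_sphere_pair[measurable]:
  "(\<lambda>p. euclid_inner d (fst p) (snd p)) \<in> borel_measurable (sphere_unif d \<Otimes>\<^sub>M sphere_unif d)"
  using measurable_euclid_inner_pair[of d]
  by (subst measurable_cong_sets[OF sets_pair_measure_cong[OF sets_sphere_unif sets_sphere_unif] refl])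

lemma nn_integral_sphere_unif_pair_inner_power:
  "(\<integral>\<^sup>+p. ennreal (euclid_inner d (fst p) (snd p) ^ (2*q)) \<partial>(sphere_unif d \<Otimes>\<^sub>M sphere_unif d))
     = ennreal (sphere_inner_moment d q)"
proof -
  interpret prob_space "sphere_unif d"
    by (rule prob_space_sphere_unif)
  have [measurable]: "(\<lambda>x. ennreal (sqnorm d x ^ q)) \<in> borel_measurable (sphere_unif d)"
    by (subst measurable_cong_sets[OF sets_sphere_unif refl]) measurable
  have "(\<integral>\<^sup>+p. ennreal (euclid_inner d (fst p) (snd p) ^ (2*q)) \<partial>(sphere_unif d \<Otimes>\<^sub>M sphere_unif d))
      = (\<integral>\<^sup>+x. \<integral>\<^sup>+y. ennreal (euclid_inner d x y ^ (2*q)) \<partial>sphere_unif d \<partial>sphere_unif d)"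
    by (rule nn_integral_fst[symmetric, where f="\<lambda>p. ennreal (euclid_inner d (fst p) (snd p) ^ (2*q))", simplified])
       measurable
  also have "\<dots> = (\<integral>\<^sup>+x. ennreal (sphere_inner_moment d q) * ennreal (sqnorm d x ^ q) \<partial>sphere_unif d)"
    using sphere_inner_moment_nonneg
    by (simp add: nn_integral_sphere_unif_inner_power ennreal_mult sqnorm_nonneg)
  also have "\<dots> = ennreal (sphere_inner_moment d q)"
    by (simp add: nn_integral_cmult nn_integral_sphere_unif_sqnorm_power)
  finally show ?thesis .
qed

lemma has_bochner_integral_sphere_unif_pair_inner_power:
  "has_bochner_integral (sphere_unif d \<Otimes>\<^sub>M sphere_unif d)
     (\<lambda>p. euclid_inner d (fst p) (snd p) ^ (2*q)) (sphere_inner_moment d q)"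
  using nn_integral_sphere_unif_pair_inner_power[of d q] sphere_inner_moment_nonneg[of d q]
  by (subst has_bochner_integral_iff, subst nn_integral_eq_integrable[symmetric])
     (auto simp: zero_le_even_power)

section \<open>Rescaled Gegenbauer polynomials\<close>

definition square_poly :: "nat \<Rightarrow> (nat \<Rightarrow> real) \<Rightarrow> real poly" where
  "square_poly k a = (\<Sum>j\<le>k div 2. \<Sum>j'\<le>k div 2. monom (a j * a j' * 4 ^ (k - j - j')) (k - j - j'))"

text \<open>The factor D^(k-j-j') needed to turn t^(2(k-j-j')) into a power of D t^2 is split as
  D^k / (D^(k-j) D^(k-j')) and moved into the coefficients.\<close>
lemma square_sum_eq_poly_square_poly:
  fixes a :: "nat \<Rightarrow> real" and D t :: real
  assumes D: "D > 0"
  shows "(\<Sum>j\<le>k div 2. a j * (2*t) ^ (k - 2*j))\<^sup>2 = D ^ k * poly (square_poly k (\<lambda>j. a j / D ^ (k - j))) (D * t\<^sup>2)"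
proof -
  have "(\<Sum>j\<le>k div 2. a j * (2*t) ^ (k - 2*j))\<^sup>2
     = (\<Sum>j\<le>k div 2. \<Sum>j'\<le>k div 2. (a j * (2*t) ^ (k - 2*j)) * (a j' * (2*t) ^ (k - 2*j')))"
    by (simp add: power2_eq_square sum_product)
  also have "\<dots> = (\<Sum>j\<le>k div 2. \<Sum>j'\<le>k div 2.
      D ^ k * ((a j / D ^ (k - j)) * (a j' / D ^ (k - j')) * 4 ^ (k - j - j') * (D * t\<^sup>2) ^ (k - j - j')))"
  proof (intro sum.cong refl)
    fix j j' assume "j \<in> {..k div 2}" "j' \<in> {..k div 2}"
    then have jk: "2*j \<le> k" "2*j' \<le> k"
      by auto
    define l where "l = k - j - j'"
    have "k - 2*j + (k - 2*j') = 2 * l" "k + l = (k - j) + (k - j')"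
      unfolding l_def using jk by simp_all
    then have "(2*t) ^ (k - 2*j) * (2*t) ^ (k - 2*j') = (2*t) ^ (2 * l)"
      "D ^ k * D ^ l = D ^ (k - j) * D ^ (k - j')"
      by (simp_all only: power_add[symmetric])
    moreover have "(2*t) ^ (2 * l) = 4 ^ l * (t\<^sup>2) ^ l"
      by (simp add: power_mult power_mult_distrib)
    ultimately have "(2*t) ^ (k - 2*j) * (2*t) ^ (k - 2*j') = 4 ^ l * (t\<^sup>2) ^ l"
      "D ^ k * D ^ l = D ^ (k - j) * D ^ (k - j')"
      by simp_all
    then show "(a j * (2*t) ^ (k - 2*j)) * (a j' * (2*t) ^ (k - 2*j')) =
       D ^ k * ((a j / D ^ (k - j)) * (a j' / D ^ (k - j')) * 4 ^ (k - j - j') * (D * t\<^sup>2) ^ (k - j - j'))"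
      using D unfolding l_def[symmetric] by (simp add: field_simps power_mult_distrib)
  qed
  also have "\<dots> = D ^ k * poly (square_poly k (\<lambda>j. a j / D ^ (k - j))) (D * t\<^sup>2)"
    unfolding square_poly_def by (simp add: poly_sum poly_monom sum_distrib_left)
  finally show ?thesis .
qed

lemma degree_square_poly: "degree (square_poly k a) \<le> k"
  unfolding square_poly_def
  by (intro degree_sum_le) (auto intro: order.trans[OF degree_monom_le])

lemma degree_square_poly_power: "degree (square_poly k a ^ m) \<le> m * k"
  using degree_power_le[of "square_poly k a" m] degree_square_poly[of k a]
  by (metis le_trans mult.commute mult_le_mono1)

lemma poly_eq_sum_coeff:
  fixes p :: "'a::comm_semiring_1 poly"
  assumes "degree p \<le> N"
  shows "poly p x = (\<Sum>i\<le>N. coeff p i * x ^ i)"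
proof -
  have "poly p x = (\<Sum>i\<le>degree p. coeff p i * x ^ i)"
    by (rule poly_altdef)
  also have "\<dots> = (\<Sum>i\<le>N. coeff p i * x ^ i)"
    using assms by (intro sum.mono_neutral_left) (auto simp: coeff_eq_0)
  finally show ?thesis .
qed

lemma tendsto_coeff_square_poly:
  assumes "\<And>j. ((\<lambda>D. a D j) \<longlongrightarrow> b j) F"
  shows "((\<lambda>D. coeff (square_poly k (a D)) l) \<longlongrightarrow> coeff (square_poly k b) l) F"
  unfolding square_poly_def coeff_sum coeff_monom
  by (intro tendsto_sum) (auto intro!: tendsto_intros assms)

lemma tendsto_coeff_power:
  fixes p :: "'b \<Rightarrow> 'a::{real_normed_algebra,comm_ring_1} poly"
  assumes "\<And>l. ((\<lambda>D. coeff (p D) l) \<longlongrightarrow> coeff q l) F"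
  shows "((\<lambda>D. coeff (p D ^ m) l) \<longlongrightarrow> coeff (q ^ m) l) F"
proof (induction m arbitrary: l)
  case 0
  then show ?case
    by (simp add: coeff_1)
next
  case (Suc m)
  then show ?case
    unfolding power_Suc coeff_mult by (intro tendsto_sum tendsto_mult assms)
qed

lemma tendsto_pochhammer_div_power:
  fixes a b :: real
  shows "((\<lambda>D. pochhammer (a * D + b) n / D ^ n) \<longlongrightarrow> a ^ n) at_top"
proof -
  have "((\<lambda>D. \<Prod>i<n. a + (b + real i) * (1 / D)) \<longlongrightarrow> (\<Prod>i<n. a + (b + real i) * 0)) at_top"
    by (intro tendsto_intros tendsto_divide_0[OF tendsto_const]
          filterlim_at_top_imp_at_infinity filterlim_ident)
  moreover have "eventually (\<lambda>D. (\<Prod>i<n. a + (b + real i) * (1 / D)) = pochhammer (a * D + b) n / D ^ n) at_top"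
    using eventually_gt_at_top[of 0]
    by eventually_elim (simp add: pochhammer_prod atLeast0LessThan prod_dividef field_simps)
  ultimately show ?thesis
    by (simp add: tendsto_cong)
qed

definition gegen_coeff :: "nat \<Rightarrow> real \<Rightarrow> nat \<Rightarrow> real" where
  "gegen_coeff k lam j = (-1)^j * pochhammer lam (k - j) / (fact j * fact (k - 2*j))"

lemma gegenbauer_eq_sum: "gegenbauer k lam x = (\<Sum>j\<le>k div 2. gegen_coeff k lam j * (2*x) ^ (k - 2*j))"
  unfolding gegenbauer_def gegen_coeff_def ..

text \<open>Coefficients of D^(-k/2) C_k^((D-1)/2)(z / sqrt D) in the basis (2z)^(k-2j).\<close>
definition gegen_scaled_coeff :: "nat \<Rightarrow> real \<Rightarrow> nat \<Rightarrow> real" where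
  "gegen_scaled_coeff k D j = gegen_coeff k ((D - 1) / 2) j / D ^ (k - j)"

definition hermite_coeff :: "nat \<Rightarrow> nat \<Rightarrow> real" where
  "hermite_coeff k j = (-1)^j / (fact j * fact (k - 2*j) * 2 ^ (k - j))"

lemma gegenbauer_power_eq_poly:
  assumes "D > 0"
  shows "(gegenbauer k ((D - 1) / 2) t) ^ (2*m) = D ^ (m*k) * poly (square_poly k (gegen_scaled_coeff k D) ^ m) (D * t\<^sup>2)"
proof -
  have "(gegenbauer k ((D - 1) / 2) t)\<^sup>2 = D ^ k * poly (square_poly k (gegen_scaled_coeff k D)) (D * t\<^sup>2)"
    unfolding gegenbauer_eq_sum gegen_scaled_coeff_def[abs_def]
    by (rule square_sum_eq_poly_square_poly[OF assms])
  then have "((gegenbauer k ((D - 1) / 2) t)\<^sup>2) ^ m = (D ^ k) ^ m * poly (square_poly k (gegen_scaled_coeff k D) ^ m) (D * t\<^sup>2)"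
    by (simp add: power_mult_distrib poly_power)
  then show ?thesis
    by (simp add: power_mult[symmetric] mult.commute)
qed

lemma tendsto_gegen_scaled_coeff: "((\<lambda>D. gegen_scaled_coeff k D j) \<longlongrightarrow> hermite_coeff k j) at_top"
proof -
  have "((\<lambda>D::real. (-1)^j / (fact j * fact (k - 2*j)) * (pochhammer (1/2 * D + - 1/2) (k - j) / D ^ (k - j)))
      \<longlongrightarrow> (-1)^j / (fact j * fact (k - 2*j)) * (1/2) ^ (k - j)) at_top"
    by (intro tendsto_intros tendsto_pochhammer_div_power)
  then show ?thesis
    unfolding gegen_scaled_coeff_def gegen_coeff_def hermite_coeff_def
    by (simp add: power_one_over mult_ac diff_divide_distrib)
qed

lemma tendsto_coeff_gegen_poly:
  "((\<lambda>D. coeff (square_poly k (gegen_scaled_coeff k D) ^ m) i) \<longlongrightarrow> coeff (square_poly k (hermite_coeff k) ^ m) i) at_top"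
  by (intro tendsto_coeff_power tendsto_coeff_square_poly tendsto_gegen_scaled_coeff)

definition hermite_poly :: "nat \<Rightarrow> real poly" where
  "hermite_poly k = (\<Sum>j\<le>k div 2. monom (hermite_coeff k j * 2 ^ (k - 2*j)) (k - 2*j))"

lemma poly_hermite_poly: "poly (hermite_poly k) z = (\<Sum>j\<le>k div 2. hermite_coeff k j * (2*z) ^ (k - 2*j))"
  unfolding hermite_poly_def by (simp add: poly_sum poly_monom power_mult_distrib mult_ac)

lemma hermite_poly_nonzero: "hermite_poly k \<noteq> 0"
proof -
  have "coeff (hermite_poly k) k = (\<Sum>j\<le>k div 2. if j = 0 then hermite_coeff k j * 2 ^ (k - 2*j) else 0)"
    unfolding hermite_poly_def coeff_sum coeff_monom
    by (intro sum.cong refl) auto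
  also have "\<dots> = hermite_coeff k 0 * 2 ^ k"
    by (simp add: sum.delta')
  finally show ?thesis
    by (auto simp: hermite_coeff_def)
qed

lemma hermite_poly_power_eq_sum:
  "poly (hermite_poly k) z ^ (2*m) = (\<Sum>i\<le>m*k. coeff (square_poly k (hermite_coeff k) ^ m) i * z ^ (2*i))"
proof -
  have "(poly (hermite_poly k) z)\<^sup>2 = poly (square_poly k (hermite_coeff k)) (z\<^sup>2)"
    unfolding poly_hermite_poly using square_sum_eq_poly_square_poly[where D=1 and a="hermite_coeff k" and k=k and t=z] by simp
  then have "poly (hermite_poly k) z ^ (2*m) = poly (square_poly k (hermite_coeff k) ^ m) (z\<^sup>2)"
    by (simp add: power_mult poly_power)
  also have "\<dots> = (\<Sum>i\<le>m*k. coeff (square_poly k (hermite_coeff k) ^ m) i * (z\<^sup>2) ^ i)"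
    by (rule poly_eq_sum_coeff[OF degree_square_poly_power])
  finally show ?thesis
    by (simp add: power_mult)
qed

text \<open>E[H(Z)^(2m)] for a standard normal Z, where H = He_k / k! is the limit of the rescaled
  Gegenbauer polynomials.\<close>
definition gegen_moment_limit :: "nat \<Rightarrow> nat \<Rightarrow> real" where
  "gegen_moment_limit k m = (\<integral>z. std_normal_density z * poly (hermite_poly k) z ^ (2*m) \<partial>lborel)"

lemma gegen_moment_limit_eq_sum:
  "gegen_moment_limit k m = (\<Sum>i\<le>m*k. coeff (square_poly k (hermite_coeff k) ^ m) i * std_normal_moment i)"
proof -
  have "gegen_moment_limit k m
      = (\<integral>z. (\<Sum>i\<le>m*k. coeff (square_poly k (hermite_coeff k) ^ m) i * (std_normal_density z * z ^ (2*i))) \<partial>lborel)"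
    unfolding gegen_moment_limit_def hermite_poly_power_eq_sum by (simp add: sum_distrib_left mult_ac)
  also have "\<dots> = (\<Sum>i\<le>m*k. coeff (square_poly k (hermite_coeff k) ^ m) i * std_normal_moment i)"
    by (simp add: integrable_std_normal_moment integral_std_normal_moment_even std_normal_moment_def)
  finally show ?thesis .
qed

lemma gegen_moment_limit_pos: "gegen_moment_limit k m > 0"
proof -
  define f where "f z = std_normal_density z * poly (hermite_poly k) z ^ (2*m)" for z
  have "integrable lborel f"
    unfolding f_def hermite_poly_power_eq_sum
    by (simp add: sum_distrib_left mult.left_commute[of "std_normal_density _"] integrable_std_normal_moment)
  moreover have "AE z in lborel. 0 \<le> f z"
    unfolding f_def by (simp add: zero_le_even_power)
  moreover have "\<not> (AE z in lborel. f z = 0)"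
  proof
    have "AE z in lborel. z \<notin> {z. poly (hermite_poly k) z = 0}"
      using poly_roots_finite[OF hermite_poly_nonzero]
      by (intro AE_not_in countable_imp_null_set_lborel countable_finite)
    then have nonzero: "AE z in lborel. f z \<noteq> 0"
    proof (rule eventually_mono)
      fix z assume "z \<notin> {z. poly (hermite_poly k) z = 0}"
      moreover have "std_normal_density z \<noteq> 0"
        using normal_density_pos[of 1 0 z] by simp
      ultimately show "f z \<noteq> 0"
        by (simp add: f_def)
    qed
    assume "AE z in lborel. f z = 0"
    with nonzero have "AE z in lborel. f z \<noteq> 0 \<and> f z = 0"
      by (rule AE_conjI)
    then show False
      by (simp add: eventually_False ae_filter_eq_bot_iff)
  qed
  ultimately show ?thesis
    unfolding gegen_moment_limit_def f_def[symmetric]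
    using integral_nonneg_eq_0_iff_AE integral_nonneg_AE by (metis order_le_less)
qed

section \<open>Asymptotics\<close>

lemma gegen_moment_eq_sum:
  assumes "d \<ge> 1"
  shows "gegen_moment d k m = real d ^ (m*k) *
     (\<Sum>i\<le>m*k. coeff (square_poly k (gegen_scaled_coeff k (real d)) ^ m) i * (real d ^ i * sphere_inner_moment d i))"
proof -
  define D where "D = real d"
  define c where "c i = coeff (square_poly k (gegen_scaled_coeff k D) ^ m) i" for i
  let ?S = "sphere_unif d \<Otimes>\<^sub>M sphere_unif d"
  have D: "D > 0"
    using assms unfolding D_def by simp
  have "(gegenbauer k ((real d - 1) / 2) (\<Sum>i\<le>d. fst p i * snd p i)) ^ (2*m)
      = (\<Sum>i\<le>m*k. D ^ (m*k) * c i * D ^ i * euclid_inner d (fst p) (snd p) ^ (2*i))" for p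
  proof -
    have "(gegenbauer k ((D - 1) / 2) (euclid_inner d (fst p) (snd p))) ^ (2*m)
        = D ^ (m*k) * (\<Sum>i\<le>m*k. c i * (D * (euclid_inner d (fst p) (snd p))\<^sup>2) ^ i)"
      unfolding gegenbauer_power_eq_poly[OF D] c_def by (subst poly_eq_sum_coeff[OF degree_square_poly_power]) simp
    then show ?thesis
      unfolding D_def euclid_inner_def
      by (simp add: sum_distrib_left power_mult_distrib mult_ac flip: power_mult)
  qed
  then have "gegen_moment d k m = (\<integral>p. (\<Sum>i\<le>m*k. D ^ (m*k) * c i * D ^ i * euclid_inner d (fst p) (snd p) ^ (2*i)) \<partial>?S)"
    unfolding gegen_moment_def by simp
  also have "\<dots> = (\<Sum>i\<le>m*k. D ^ (m*k) * c i * D ^ i * sphere_inner_moment d i)"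
    using has_bochner_integral_sphere_unif_pair_inner_power[of d]
    by (subst Bochner_Integration.integral_sum) (auto simp: has_bochner_integral_iff)
  finally show ?thesis
    unfolding c_def D_def by (simp add: sum_distrib_left mult_ac)
qed

lemma tendsto_scaled_sphere_inner_moment:
  "((\<lambda>d. real d ^ i * sphere_inner_moment d i) \<longlongrightarrow> std_normal_moment i) sequentially"
proof -
  have "((\<lambda>D::real. std_normal_moment i / (2^i * (pochhammer (1/2 * D + 1/2) i / D ^ i)))
      \<longlongrightarrow> std_normal_moment i / (2^i * (1/2) ^ i)) at_top"
    by (intro tendsto_intros tendsto_pochhammer_div_power) (simp add: power_one_over)
  moreover have "std_normal_moment i / (2^i * (1/2) ^ i) = std_normal_moment i"
    by (simp add: power_mult_distrib[symmetric])
  ultimately have "((\<lambda>d. std_normal_moment i / (2^i * (pochhammer (1/2 * real d + 1/2) i / real d ^ i)))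
      \<longlongrightarrow> std_normal_moment i) sequentially"
    using filterlim_compose[OF _ filterlim_real_sequentially] by fastforce
  moreover have "eventually (\<lambda>d. std_normal_moment i / (2^i * (pochhammer (1/2 * real d + 1/2) i / real d ^ i))
      = real d ^ i * sphere_inner_moment d i) sequentially"
    using eventually_gt_at_top[of "0::nat"]
    by eventually_elim (simp add: sphere_inner_moment_def gauss_sqnorm_moment_def add_divide_distrib ac_simps)
  ultimately show ?thesis
    by (rule Lim_transform_eventually)
qed

lemma of_nat_choose_eq_pochhammer:
  assumes "d \<ge> 1"
  shows "real ((d + r - 1) choose (d - 1)) = pochhammer (real d) r / fact r"
proof -
  have "(d + r - 1) choose (d - 1) = (d + r - 1) choose r"
    using binomial_symmetric[of "d - 1" "d + r - 1"] assms by simp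
  also have "real ((d + r - 1) choose r) = pochhammer (real (d + r - 1) - real r + 1) r / fact r"
    by (simp add: binomial_gbinomial gbinomial_pochhammer')
  also have "real (d + r - 1) - real r + 1 = real d"
    using assms by (simp add: of_nat_diff)
  finally show ?thesis .
qed

lemma dim_harm_eq_pochhammer:
  assumes "d \<ge> 2" "k \<ge> 1"
  shows "dim_harm k d = pochhammer (real d) (k - 1) / fact (k - 1) + pochhammer (real d) k / fact k"
proof -
  have "d + k - 2 = d + (k - 1) - 1"
    using assms by simp
  then show ?thesis
    unfolding dim_harm_def
    using of_nat_choose_eq_pochhammer[of d "k - 1"] of_nat_choose_eq_pochhammer[of d k] assms by simp
qed

lemma tendsto_dim_harm_ratio:
  assumes k: "k \<ge> 1"
  shows "((\<lambda>D::real. (pochhammer D (k - 1) / fact (k - 1) + pochhammer D k / fact k) /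
              ((1 + 2 * real k / (D - 1)) * D ^ k / fact k)) \<longlongrightarrow> 1) at_top"
proof -
  have "filterlim (\<lambda>D::real. D - 1) at_top at_top"
    using filterlim_tendsto_add_at_top[OF tendsto_const[of "-1"] filterlim_ident] by simp
  then have "((\<lambda>D::real. (real k * (1 / D) * (pochhammer (1 * D + 0) (k - 1) / D ^ (k - 1))
        + pochhammer (1 * D + 0) k / D ^ k) / (1 + 2 * real k / (D - 1)))
      \<longlongrightarrow> (real k * 0 * 1 ^ (k - 1) + 1 ^ k) / (1 + 0)) at_top"
    by (intro tendsto_intros tendsto_pochhammer_div_power tendsto_divide_0[OF tendsto_const]
          filterlim_at_top_imp_at_infinity filterlim_ident) auto
  then have "((\<lambda>D::real. (real k * (1 / D) * (pochhammer D (k - 1) / D ^ (k - 1))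
        + pochhammer D k / D ^ k) / (1 + 2 * real k / (D - 1))) \<longlongrightarrow> 1) at_top"
    by simp
  moreover have "eventually (\<lambda>D::real. (real k * (1 / D) * (pochhammer D (k - 1) / D ^ (k - 1))
        + pochhammer D k / D ^ k) / (1 + 2 * real k / (D - 1))
      = (pochhammer D (k - 1) / fact (k - 1) + pochhammer D k / fact k) /
          ((1 + 2 * real k / (D - 1)) * D ^ k / fact k)) at_top"
    using eventually_gt_at_top[of 1]
  proof eventually_elim
    case (elim D)
    have alg: "(x * (1 / D) * (P' / E) + P / (D * E)) / c = (P' / F + P / (x * F)) / (c * (D * E) / (x * F))"
      if "E > 0" "F > 0" "x > 0" "c > 0" for x E F c P' P :: real
      using that elim by (simp add: field_simps)
    have "fact k = real k * fact (k - 1)" "D ^ k = D * D ^ (k - 1)"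
      using k by (simp_all add: fact_reduce power_eq_if)
    moreover have "1 + 2 * real k / (D - 1) > 0"
      using elim by (simp add: add_pos_nonneg)
    ultimately show ?case
      using elim k by (simp only:) (rule alg, simp_all)
  qed
  ultimately show ?thesis
    by (simp add: tendsto_cong)
qed

theorem lemma1:
  fixes d :: "nat \<Rightarrow> nat" and k m :: nat
  assumes "\<And>n. d n \<ge> 2"
    and "filterlim d at_top sequentially"
    and "k \<ge> 1" and "m \<ge> 1"
  shows "(\<exists>c::real. c \<noteq> 0 \<and>
            ((\<lambda>n. gegen_moment (d n) k m / real (d n) ^ (m * k)) \<longlongrightarrow> c) sequentially)
       \<and> ((\<lambda>n. dim_harm k (d n) /
              ((1 + 2 * real k / (real (d n) - 1)) * real (d n) ^ k / fact k))
           \<longlongrightarrow> 1) sequentially"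
proof
  have d_real: "filterlim (\<lambda>n. real (d n)) at_top sequentially"
    by (rule filterlim_compose[OF filterlim_real_sequentially assms(2)])
  have "gegen_moment (d n) k m / real (d n) ^ (m * k)
      = (\<Sum>i\<le>m*k. coeff (square_poly k (gegen_scaled_coeff k (real (d n))) ^ m) i
          * (real (d n) ^ i * sphere_inner_moment (d n) i))" for n
    using assms(1)[of n] by (simp add: gegen_moment_eq_sum)
  moreover have "((\<lambda>n. \<Sum>i\<le>m*k. coeff (square_poly k (gegen_scaled_coeff k (real (d n))) ^ m) i
          * (real (d n) ^ i * sphere_inner_moment (d n) i)) \<longlongrightarrow> gegen_moment_limit k m) sequentially"
    unfolding gegen_moment_limit_eq_sum
    by (intro tendsto_sum tendsto_mult filterlim_compose[OF tendsto_coeff_gegen_poly d_real]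
          filterlim_compose[OF tendsto_scaled_sphere_inner_moment assms(2)])
  ultimately show "\<exists>c::real. c \<noteq> 0 \<and> ((\<lambda>n. gegen_moment (d n) k m / real (d n) ^ (m * k)) \<longlongrightarrow> c) sequentially"
    using gegen_moment_limit_pos[of k m] by (intro exI[of _ "gegen_moment_limit k m"]) simp
  show "((\<lambda>n. dim_harm k (d n) / ((1 + 2 * real k / (real (d n) - 1)) * real (d n) ^ k / fact k)) \<longlongrightarrow> 1) sequentially"
    using filterlim_compose[OF tendsto_dim_harm_ratio[OF assms(3)] d_real]
    by (simp add: dim_harm_eq_pochhammer[OF assms(1) assms(3)])
qed

end
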